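(* There is a constant $C(m,\tau,\gamma,\beta,d)$ such that the following holds. Let $\ell\ge1$, $L=\ell^\gamma$, $\Lambda_L=\Lambda_L^{(N)}(\mathbf x_0)$ with $\mathbf x_0\in\mathbb Z^{Nd}$, and let $(\psi,\mu)$ be an eigenpair of $H_{\Lambda_L}$. Let $\Upsilon\subsetneq\Lambda_L$ be an $m$-buffered cube in $\Lambda_L$ with set of good centers $\mathcal G_\Upsilon$, and suppose $$\operatorname{dist}(\mu,\sigma(H_\Upsilon))\ge\tfrac12e^{-L^\beta},\qquad \min_{\mathbf a\in\mathcal G_\Upsilon}\operatorname{dist}(\mu,\sigma(H_{\Lambda_\ell(\mathbf a)}))\ge\tfrac12e^{-L^\beta},$$ and $\ell\ge C(m,\tau,\gamma,\beta,d)(N\log(2+N))^{1/\tau}$. Then, with $m'=m(1-3\ell^{-\frac{1-\tau}{2}})$, $$\max_{\mathbf y\in\Upsilon}|\psi(\mathbf y)|\le e^{-\frac{m'}{2}\ell}\max_{\mathbf a\in\mathcal G_\Upsilon}\max_{\mathbf v\in\partial^{\Lambda_L}_{ex}\Lambda_\ell(\mathbf a)}|\psi(\mathbf v)|.$$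
   Context: Fix $\beta,\tau\in(0,1)$, $\gamma>1$ with $\beta<\gamma^{-1}<1<\gamma<2$, $\max(\gamma\beta,\gamma^{-1})<\tau<1$; $m>0$, $d,N\ge1$. Points of $\mathbb Z^{Nd}$: $\mathbf x=(x_1,\dots,x_N)$, $x_j\in\mathbb Z^d$; $d_S(\mathbf x,\mathbf y)=\min_{\pi\in S_N}\|\mathbf x-\pi\mathbf y\|_\infty$ with $\pi\mathbf y=(y_{\pi(1)},\dots,y_{\pi(N)})$; $d_S(\mathbf x,A)=\min_{\mathbf y\in A}d_S(\mathbf x,\mathbf y)$. $\Lambda_R(\mathbf b)=\Lambda_R^{(N)}(\mathbf b)=\{\mathbf x:d_S(\mathbf x,\mathbf b)\le R\}$. $H=-\Delta^{(N)}+\lambda V+U$ on $\ell^2(\mathbb Z^{Nd})$ with $(\Delta^{(N)}\varphi)(\mathbf x)=\sum_{\|\mathbf y-\mathbf x\|_1=1}\varphi(\mathbf y)$, $V(\mathbf x)=\sum_j\mathcal V(x_j)$, $U(\mathbf x)=\sum_{i<j}\mathcal U(x_i-x_j)$ (fixed real $\mathcal V$, finitely supported $\mathcal U$, $\lambda>0$); $H_\Theta=1_\Theta H1_\Theta$ on $\ell^2(\Theta)$. For $\Phi\subseteq\Theta$ symmetric: $\partial^\Theta\Phi=\{(\mathbf u,\mathbf v)\in\Phi\times(\Theta\setminus\Phi):d_S(\mathbf u,\mathbf v)=1\}$; $\partial^\Theta_{ex}\Phi=\{\mathbf v\in\Theta\setminus\Phi:\exists\mathbf u,(\mathbf u,\mathbf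 v)\in\partial^\Theta\Phi\}$; $\partial^\Theta_{in}\Phi=\{\mathbf u\in\Phi:\exists\mathbf v,(\mathbf u,\mathbf v)\in\partial^\Theta\Phi\}$; $\Phi^{\Theta,r}=\{\mathbf x\in\Phi:d_S(\mathbf x,\Theta\setminus\Phi)\ge r\}$. Localizing: for a cube $\Lambda_\ell$, $\varphi\in\ell^2(\Lambda_\ell)$ is $(\mathbf x,m)$-localizing if $\|\varphi\|_2=1$ and $|\varphi(\mathbf y)|\le e^{-md_S(\mathbf y,\mathbf x)}$ for all $\mathbf y\in\Lambda_\ell$ with $d_S(\mathbf y,\mathbf x)\ge\ell^\tau$; $m$-localizing if this holds for some $\mathbf x\in\Lambda_\ell$; $\Lambda_\ell$ is $m$-localizing for $H$ if $H_{\Lambda_\ell}$ has an orthonormal eigenbasis of $m$-localizing functions. Cover: $\Xi_{L,\ell}$ is the set of $\mathbf a\in\mathbb Z^{Nd}$ with $\Lambda_\ell(\mathbf a)\subseteq\Lambda_L$. Buffered cube: a symmetric set $\Upsilon\subseteq\Lambda_L$ is an ($m$-)buffered cube in $\Lambda_L$ if (i) $\Upsilon=\Lambda_R(\mathbf b)\cap\Lambda_L$ for some $\mathbf b\in\Lambda_L$ and $\ell\le R\le L$, and (ii) there is a set of good centers $\mathcal G_\Upsilon\subseteq\Xi_{L,\ell}$ such that each $\Lambda_\ell(\mathbf a)$, $\mathbf a\in\mathcal G_\Upsilon$, is $m$-localizing for $H$, and $\partial^{\Lambda_L}_{in}\Upsilon\subseteq\bigcup_{\mathbf a\in\mathcal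 G_\Upsilon}\Lambda_\ell^{\Lambda_L,\ell}(\mathbf a)$, where $\Lambda_\ell^{\Lambda_L,\ell}(\mathbf a)=\{\mathbf x\in\Lambda_\ell(\mathbf a):d_S(\mathbf x,\Lambda_L\setminus\Lambda_\ell(\mathbf a))\ge\ell\}$. *)

theory Defs
  imports "HOL-Analysis.Analysis" "HOL-Combinatorics.Permutations"
begin

text \<open>A point x = (x_1,...,x_N) of Z^(Nd) is encoded as a function
  x :: nat => nat => int, where x j k is the k-th coordinate of particle j;
  only points with x j k = 0 whenever j >= N or k >= d are admissible.\<close>

type_synonym pt = "nat \<Rightarrow> nat \<Rightarrow> int"

definition conf :: "nat \<Rightarrow> nat \<Rightarrow> pt set" where
  "conf N d = {x. \<forall>j k. (N \<le> j \<or> d \<le> k) \<longrightarrow> x j k = 0}"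

definition supdist :: "nat \<Rightarrow> nat \<Rightarrow> pt \<Rightarrow> pt \<Rightarrow> int" where
  "supdist N d x y = Max {\<bar>x j k - y j k\<bar> | j k. j < N \<and> k < d}"

definition l1dist :: "nat \<Rightarrow> nat \<Rightarrow> pt \<Rightarrow> pt \<Rightarrow> int" where
  "l1dist N d x y = (\<Sum>j<N. \<Sum>k<d. \<bar>x j k - y j k\<bar>)"

definition perm_pt :: "(nat \<Rightarrow> nat) \<Rightarrow> pt \<Rightarrow> pt" where
  "perm_pt \<pi> y = (\<lambda>j. y (\<pi> j))"

definition dS :: "nat \<Rightarrow> nat \<Rightarrow> pt \<Rightarrow> pt \<Rightarrow> real" where
  "dS N d x y = real_of_int (Min {supdist N d x (perm_pt \<pi> y) | \<pi>. \<pi> permutes {..<N}})"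

definition cube :: "nat \<Rightarrow> nat \<Rightarrow> real \<Rightarrow> pt \<Rightarrow> pt set" where
  "cube N d R b = {x \<in> conf N d. dS N d x b \<le> R}"

definition symmetric_set :: "nat \<Rightarrow> pt set \<Rightarrow> bool" where
  "symmetric_set N \<Phi> \<longleftrightarrow> (\<forall>x\<in>\<Phi>. \<forall>\<pi>. \<pi> permutes {..<N} \<longrightarrow> perm_pt \<pi> x \<in> \<Phi>)"

definition bdry :: "nat \<Rightarrow> nat \<Rightarrow> pt set \<Rightarrow> pt set \<Rightarrow> (pt \<times> pt) set" where
  "bdry N d \<Theta> \<Phi> = {(u, v). u \<in> \<Phi> \<and> v \<in> \<Theta> - \<Phi> \<and> dS N d u v = 1}"

definition ex_bdry :: "nat \<Rightarrow> nat \<Rightarrow> pt set \<Rightarrow> pt set \<Rightarrow> pt set" where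
  "ex_bdry N d \<Theta> \<Phi> = {v \<in> \<Theta> - \<Phi>. \<exists>u. (u, v) \<in> bdry N d \<Theta> \<Phi>}"

definition in_bdry :: "nat \<Rightarrow> nat \<Rightarrow> pt set \<Rightarrow> pt set \<Rightarrow> pt set" where
  "in_bdry N d \<Theta> \<Phi> = {u \<in> \<Phi>. \<exists>v. (u, v) \<in> bdry N d \<Theta> \<Phi>}"

text \<open>Phi^{Theta,r} = {x in Phi : d_S(x, Theta - Phi) >= r}
  (with the convention d_S(x, {}) = infinity)\<close>
definition inner_part :: "nat \<Rightarrow> nat \<Rightarrow> pt set \<Rightarrow> pt set \<Rightarrow> real \<Rightarrow> pt set" where
  "inner_part N d \<Theta> \<Phi> r = {x \<in> \<Phi>. \<forall>y \<in> \<Theta> - \<Phi>. r \<le> dS N d x y}"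

definition potV :: "nat \<Rightarrow> ((nat \<Rightarrow> int) \<Rightarrow> real) \<Rightarrow> pt \<Rightarrow> real" where
  "potV N calV x = (\<Sum>j<N. calV (x j))"

definition potU :: "nat \<Rightarrow> ((nat \<Rightarrow> int) \<Rightarrow> real) \<Rightarrow> pt \<Rightarrow> real" where
  "potU N calU x = (\<Sum>j<N. \<Sum>i<j. calU (\<lambda>k. x i k - x j k))"

text \<open>H_Theta = 1_Theta H 1_Theta, H = - Delta + lambda V + U, acting on
  functions phi vanishing off Theta (values given at points of Theta).\<close>
definition Hrestr :: "nat \<Rightarrow> nat \<Rightarrow> real \<Rightarrow> ((nat \<Rightarrow> int) \<Rightarrow> real) \<Rightarrow> ((nat \<Rightarrow> int) \<Rightarrow> real)
    \<Rightarrow> pt set \<Rightarrow> (pt \<Rightarrow> complex) \<Rightarrow> pt \<Rightarrow> complex" where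
  "Hrestr N d lam calV calU \<Theta> \<phi> x =
     (if x \<in> \<Theta> then
        - (\<Sum>y \<in> {y \<in> conf N d. l1dist N d y x = 1}. (if y \<in> \<Theta> then \<phi> y else 0))
        + of_real (lam * potV N calV x + potU N calU x) * \<phi> x
      else 0)"

definition supp_in :: "pt set \<Rightarrow> (pt \<Rightarrow> complex) \<Rightarrow> bool" where
  "supp_in \<Theta> \<phi> \<longleftrightarrow> (\<forall>x. x \<notin> \<Theta> \<longrightarrow> \<phi> x = 0)"

definition is_eigenpair :: "nat \<Rightarrow> nat \<Rightarrow> real \<Rightarrow> ((nat \<Rightarrow> int) \<Rightarrow> real) \<Rightarrow> ((nat \<Rightarrow> int) \<Rightarrow> real)
    \<Rightarrow> pt set \<Rightarrow> (pt \<Rightarrow> complex) \<Rightarrow> real \<Rightarrow> bool" where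
  "is_eigenpair N d lam calV calU \<Theta> \<phi> e \<longleftrightarrow>
     supp_in \<Theta> \<phi> \<and> (\<exists>x\<in>\<Theta>. \<phi> x \<noteq> 0) \<and>
     (\<forall>x\<in>\<Theta>. Hrestr N d lam calV calU \<Theta> \<phi> x = of_real e * \<phi> x)"

text \<open>spectrum of H_Theta (Theta finite, H_Theta self-adjoint: the set of its
  eigenvalues, all of which are real)\<close>
definition spec :: "nat \<Rightarrow> nat \<Rightarrow> real \<Rightarrow> ((nat \<Rightarrow> int) \<Rightarrow> real) \<Rightarrow> ((nat \<Rightarrow> int) \<Rightarrow> real)
    \<Rightarrow> pt set \<Rightarrow> real set" where
  "spec N d lam calV calU \<Theta> = {e. \<exists>\<phi>. is_eigenpair N d lam calV calU \<Theta> \<phi> e}"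

definition inner_l2 :: "pt set \<Rightarrow> (pt \<Rightarrow> complex) \<Rightarrow> (pt \<Rightarrow> complex) \<Rightarrow> complex" where
  "inner_l2 \<Theta> \<phi> \<psi> = (\<Sum>x\<in>\<Theta>. \<phi> x * cnj (\<psi> x))"

definition loc_at :: "nat \<Rightarrow> nat \<Rightarrow> real \<Rightarrow> real \<Rightarrow> real \<Rightarrow> pt set \<Rightarrow> pt \<Rightarrow> (pt \<Rightarrow> complex) \<Rightarrow> bool" where
  "loc_at N d \<tau> m ell \<Theta> x \<phi> \<longleftrightarrow>
     (\<Sum>y\<in>\<Theta>. (cmod (\<phi> y))\<^sup>2) = 1 \<and>
     (\<forall>y\<in>\<Theta>. ell powr \<tau> \<le> dS N d y x \<longrightarrow> cmod (\<phi> y) \<le> exp (- m * dS N d y x))"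

definition m_loc_fun :: "nat \<Rightarrow> nat \<Rightarrow> real \<Rightarrow> real \<Rightarrow> real \<Rightarrow> pt set \<Rightarrow> (pt \<Rightarrow> complex) \<Rightarrow> bool" where
  "m_loc_fun N d \<tau> m ell \<Theta> \<phi> \<longleftrightarrow> (\<exists>x\<in>\<Theta>. loc_at N d \<tau> m ell \<Theta> x \<phi>)"

definition m_loc_cube :: "nat \<Rightarrow> nat \<Rightarrow> real \<Rightarrow> ((nat \<Rightarrow> int) \<Rightarrow> real) \<Rightarrow> ((nat \<Rightarrow> int) \<Rightarrow> real)
    \<Rightarrow> real \<Rightarrow> real \<Rightarrow> real \<Rightarrow> pt \<Rightarrow> bool" where
  "m_loc_cube N d lam calV calU \<tau> m ell a \<longleftrightarrow>
     (let \<Theta> = cube N d ell a in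
      \<exists>B. finite B \<and>
        (\<forall>\<phi>\<in>B. supp_in \<Theta> \<phi> \<and> (\<exists>e. is_eigenpair N d lam calV calU \<Theta> \<phi> e)
                 \<and> m_loc_fun N d \<tau> m ell \<Theta> \<phi>) \<and>
        (\<forall>\<phi>\<in>B. \<forall>\<psi>\<in>B. inner_l2 \<Theta> \<phi> \<psi> = (if \<phi> = \<psi> then 1 else 0)) \<and>
        (\<forall>f. supp_in \<Theta> f \<longrightarrow> (\<exists>c. \<forall>x\<in>\<Theta>. f x = (\<Sum>\<phi>\<in>B. c \<phi> * \<phi> x))))"

definition Xi :: "nat \<Rightarrow> nat \<Rightarrow> real \<Rightarrow> pt \<Rightarrow> real \<Rightarrow> pt set" where
  "Xi N d L x0 ell = {a \<in> conf N d. cube N d ell a \<subseteq> cube N d L x0}"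

definition buffered :: "nat \<Rightarrow> nat \<Rightarrow> real \<Rightarrow> ((nat \<Rightarrow> int) \<Rightarrow> real) \<Rightarrow> ((nat \<Rightarrow> int) \<Rightarrow> real)
    \<Rightarrow> real \<Rightarrow> real \<Rightarrow> real \<Rightarrow> real \<Rightarrow> pt \<Rightarrow> pt set \<Rightarrow> pt set \<Rightarrow> bool" where
  "buffered N d lam calV calU \<tau> m ell L x0 \<Upsilon> G \<longleftrightarrow>
     symmetric_set N \<Upsilon> \<and> \<Upsilon> \<subseteq> cube N d L x0 \<and>
     (\<exists>b R. b \<in> cube N d L x0 \<and> ell \<le> R \<and> R \<le> L \<and> \<Upsilon> = cube N d R b \<inter> cube N d L x0) \<and>
     G \<subseteq> Xi N d L x0 ell \<and>
     (\<forall>a\<in>G. m_loc_cube N d lam calV calU \<tau> m ell a) \<and>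
     in_bdry N d (cube N d L x0) \<Upsilon> \<subseteq>
       (\<Union>a\<in>G. inner_part N d (cube N d L x0) (cube N d ell a) ell)"

end

(* The eigenvalue equation for H on the large cube says that (H_Upsilon - mu) applied to the
   restriction of psi to Upsilon consists only of the hopping terms from Upsilon to its exterior
   boundary, so the gap condition bounds psi on Upsilon by 2 e^(L^beta) times the values of psi just
   outside Upsilon.  Each such point lies deep inside a good cube Lambda_ell(a); running the same
   argument there, with the localized eigenbasis of H on Lambda_ell(a), gains the decay
   e^(-m (ell - 2 - 2 ell^tau)) of the basis functions between that point and the boundary of
   Lambda_ell(a), at the price of another factor 2 e^(L^beta).  Once N <= ell^tau, the counting
   factors N!, (2L+1)^(Nd), 3^(Nd) and e^(2 L^beta) are e^(o(ell)), so the total factor is at most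
   e^(-m ell / 2).  The resolvent bound on Upsilon is the spectral theorem for Hermitian operators on
   finitely supported functions, which follows from the fundamental theorem of algebra applied to
   an annihilating polynomial of the Krylov vectors. *)

theory Submission
  imports Defs "HOL-Library.Function_Algebras" "HOL-Computational_Algebra.Fundamental_Theorem_Algebra"
    "HOL-Real_Asymp.Real_Asymp"
begin

section \<open>The symmetrized distance\<close>

locale config_space =
  fixes N d :: nat
  assumes N_pos: "1 \<le> N" and d_pos: "1 \<le> d"
begin

lemma supdist_eq_Max: "supdist N d x y = Max ((\<lambda>(j, k). \<bar>x j k - y j k\<bar>) ` ({..<N} \<times> {..<d}))"
  unfolding supdist_def by (rule arg_cong[where f = Max]) auto

lemma coord_dist_le_supdist: "j < N \<Longrightarrow> k < d \<Longrightarrow> \<bar>x j k - y j k\<bar> \<le> supdist N d x y"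
  unfolding supdist_eq_Max by (rule Max_ge) auto

lemma supdist_leI: "(\<And>j k. j < N \<Longrightarrow> k < d \<Longrightarrow> \<bar>x j k - y j k\<bar> \<le> c) \<Longrightarrow> supdist N d x y \<le> c"
  unfolding supdist_eq_Max using N_pos d_pos by (subst Max_le_iff) (auto simp: lessThan_empty_iff)

lemma supdist_nonneg: "0 \<le> supdist N d x y"
  using coord_dist_le_supdist[of 0 0 x y] N_pos d_pos by auto

lemma supdist_self: "supdist N d x x = 0"
  by (intro antisym supdist_leI supdist_nonneg) auto

lemma supdist_commute: "supdist N d x y = supdist N d y x"
  by (intro antisym supdist_leI) (metis abs_minus_commute coord_dist_le_supdist)+

lemma supdist_triangle: "supdist N d x z \<le> supdist N d x y + supdist N d y z"
proof (rule supdist_leI)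
  fix j k assume "j < N" "k < d"
  then have "\<bar>x j k - y j k\<bar> \<le> supdist N d x y" "\<bar>y j k - z j k\<bar> \<le> supdist N d y z"
    by (auto intro: coord_dist_le_supdist)
  then show "\<bar>x j k - z j k\<bar> \<le> supdist N d x y + supdist N d y z" by linarith
qed

lemma perm_pt_comp: "perm_pt \<pi> (perm_pt \<sigma> y) = perm_pt (\<sigma> \<circ> \<pi>) y"
  by (simp add: perm_pt_def)

lemma perm_pt_inv_left: "\<pi> permutes {..<N} \<Longrightarrow> perm_pt (inv \<pi>) (perm_pt \<pi> y) = y"
  by (simp add: perm_pt_def permutes_inverses)

lemma perm_pt_inv_right: "\<pi> permutes {..<N} \<Longrightarrow> perm_pt \<pi> (perm_pt (inv \<pi>) y) = y"
  by (simp add: perm_pt_def permutes_inverses)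

lemma perm_pt_in_conf: "\<pi> permutes {..<N} \<Longrightarrow> x \<in> conf N d \<Longrightarrow> perm_pt \<pi> x \<in> conf N d"
  unfolding conf_def perm_pt_def by (auto simp: permutes_not_in)

lemma supdist_perm_pt:
  assumes "\<pi> permutes {..<N}"
  shows "supdist N d (perm_pt \<pi> x) (perm_pt \<pi> y) = supdist N d x y"
proof (intro antisym supdist_leI)
  fix j k assume "j < N" "k < d"
  then show "\<bar>perm_pt \<pi> x j k - perm_pt \<pi> y j k\<bar> \<le> supdist N d x y"
    using permutes_in_image[OF assms] by (auto simp: perm_pt_def intro: coord_dist_le_supdist)
next
  fix j k assume jk: "j < N" "k < d"
  have "inv \<pi> j < N" using jk permutes_in_image[OF permutes_inv[OF assms]] by auto
  then have "\<bar>perm_pt \<pi> x (inv \<pi> j) k - perm_pt \<pi> y (inv \<pi> j) k\<bar>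
      \<le> supdist N d (perm_pt \<pi> x) (perm_pt \<pi> y)"
    using jk by (intro coord_dist_le_supdist)
  then show "\<bar>x j k - y j k\<bar> \<le> supdist N d (perm_pt \<pi> x) (perm_pt \<pi> y)"
    by (simp add: perm_pt_def permutes_inverses[OF assms])
qed

lemma finite_supdist_perms: "finite {supdist N d x (perm_pt \<pi> y) | \<pi>. \<pi> permutes {..<N}}"
  using finite_permutations[of "{..<N}"] by (simp add: setcompr_eq_image)

lemma dS_le_supdist_perm: "\<pi> permutes {..<N} \<Longrightarrow> dS N d x y \<le> supdist N d x (perm_pt \<pi> y)"
  unfolding dS_def using finite_supdist_perms by (auto intro!: Min_le)

lemma dS_attained: "\<exists>\<pi>. \<pi> permutes {..<N} \<and> dS N d x y = supdist N d x (perm_pt \<pi> y)"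
proof -
  have "{supdist N d x (perm_pt \<pi> y) | \<pi>. \<pi> permutes {..<N}} \<noteq> {}"
    using permutes_id by blast
  from Min_in[OF finite_supdist_perms this] show ?thesis unfolding dS_def by auto
qed

lemma dS_le_supdist: "dS N d x y \<le> supdist N d x y"
  using dS_le_supdist_perm[OF permutes_id, of x y] by (simp add: perm_pt_def)

lemma dS_nonneg: "0 \<le> dS N d x y"
  using dS_attained[of x y] supdist_nonneg by fastforce

lemma dS_self: "dS N d x x = 0"
  using dS_le_supdist[of x x] dS_nonneg[of x x] by (simp add: supdist_self)

lemma dS_commute: "dS N d x y = dS N d y x"
proof -
  have *: "dS N d y x \<le> dS N d x y" for x y
  proof -
    obtain \<pi> where \<pi>: "\<pi> permutes {..<N}" "dS N d x y = supdist N d x (perm_pt \<pi> y)"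
      using dS_attained by blast
    have "supdist N d x (perm_pt \<pi> y) = supdist N d (perm_pt (inv \<pi>) x) y"
      using supdist_perm_pt[OF permutes_inv[OF \<pi>(1)], of x "perm_pt \<pi> y"] perm_pt_inv_left[OF \<pi>(1)]
      by simp
    then show ?thesis
      using \<pi>(2) dS_le_supdist_perm[OF permutes_inv[OF \<pi>(1)], of y x] supdist_commute by simp
  qed
  show ?thesis using *[of x y] *[of y x] by simp
qed

lemma dS_triangle: "dS N d x z \<le> dS N d x y + dS N d y z"
proof -
  obtain \<pi> where \<pi>: "\<pi> permutes {..<N}" "dS N d x y = supdist N d x (perm_pt \<pi> y)"
    using dS_attained by blast
  obtain \<sigma> where \<sigma>: "\<sigma> permutes {..<N}" "dS N d y z = supdist N d y (perm_pt \<sigma> z)"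
    using dS_attained by blast
  have "supdist N d (perm_pt \<pi> y) (perm_pt (\<sigma> \<circ> \<pi>) z) = dS N d y z"
    using supdist_perm_pt[OF \<pi>(1)] \<sigma>(2) by (simp flip: perm_pt_comp)
  moreover have "dS N d x z \<le> supdist N d x (perm_pt (\<sigma> \<circ> \<pi>) z)"
    by (rule dS_le_supdist_perm[OF permutes_compose[OF \<pi>(1) \<sigma>(1)]])
  ultimately show ?thesis
    using \<pi>(2) supdist_triangle[of x "perm_pt (\<sigma> \<circ> \<pi>) z" "perm_pt \<pi> y"] by linarith
qed

lemma dS_perm_pt_right:
  assumes "\<pi> permutes {..<N}"
  shows "dS N d x (perm_pt \<pi> y) = dS N d x y"
proof -
  have *: "dS N d x (perm_pt \<pi> y) \<le> dS N d x y" if \<pi>: "\<pi> permutes {..<N}" for \<pi> y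
  proof -
    obtain \<sigma> where \<sigma>: "\<sigma> permutes {..<N}" "dS N d x y = supdist N d x (perm_pt \<sigma> y)"
      using dS_attained by blast
    have "perm_pt (inv \<pi> \<circ> \<sigma>) (perm_pt \<pi> y) = perm_pt \<sigma> y"
      by (simp add: perm_pt_def permutes_inverses[OF \<pi>])
    then show ?thesis
      using dS_le_supdist_perm[OF permutes_compose[OF \<sigma>(1) permutes_inv[OF \<pi>]]] \<sigma>(2) by metis
  qed
  show ?thesis
    using *[OF assms, of y] *[OF permutes_inv[OF assms], of "perm_pt \<pi> y"]
    by (simp add: perm_pt_inv_left[OF assms])
qed

lemma dS_perm_pt_left: "\<pi> permutes {..<N} \<Longrightarrow> dS N d (perm_pt \<pi> x) y = dS N d x y"
  using dS_perm_pt_right dS_commute by metis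

lemma dS_less_1_imp_0: "dS N d x y < 1 \<Longrightarrow> dS N d x y = 0"
  using dS_nonneg[of x y] unfolding dS_def by auto

lemma symmetric_set_cube: "symmetric_set N (cube N d R b)"
  unfolding symmetric_set_def cube_def by (auto simp: perm_pt_in_conf dS_perm_pt_left)

end

section \<open>Counting lattice points\<close>

definition lattice_box :: "nat \<Rightarrow> nat \<Rightarrow> pt \<Rightarrow> int \<Rightarrow> pt set" where
  "lattice_box N d c r = {x \<in> conf N d. \<forall>j<N. \<forall>k<d. \<bar>x j k - c j k\<bar> \<le> r}"

lemma conf_eqI:
  assumes "x \<in> conf N d" "y \<in> conf N d" "\<And>j k. j < N \<Longrightarrow> k < d \<Longrightarrow> x j k = y j k"
  shows "x = y"
proof (intro ext)
  fix j k
  show "x j k = y j k"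
    using assms by (cases "j < N \<and> k < d") (auto simp: conf_def)
qed

definition coords :: "nat \<Rightarrow> nat \<Rightarrow> pt \<Rightarrow> nat \<times> nat \<Rightarrow> int" where
  "coords N d x = restrict (\<lambda>(j, k). x j k) ({..<N} \<times> {..<d})"

lemma inj_on_coords_box: "inj_on (coords N d) (lattice_box N d c r)"
proof
  fix x y assume xy: "x \<in> lattice_box N d c r" "y \<in> lattice_box N d c r" "coords N d x = coords N d y"
  show "x = y"
  proof (rule conf_eqI[of x N d y])
    fix j k assume "j < N" "k < d"
    then show "x j k = y j k" using fun_cong[OF xy(3), of "(j, k)"] by (simp add: coords_def)
  qed (use xy in \<open>auto simp: lattice_box_def\<close>)
qed

lemma coords_box_subset:
  "coords N d ` lattice_box N d c r \<subseteq> (\<Pi>\<^sub>E p \<in> {..<N} \<times> {..<d}. {c (fst p) (snd p) - r .. c (fst p) (snd p) + r})"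
proof
  fix v assume "v \<in> coords N d ` lattice_box N d c r"
  then obtain x where x: "x \<in> lattice_box N d c r" "v = coords N d x" by blast
  have bound: "\<bar>x j k - c j k\<bar> \<le> r" if "j < N" "k < d" for j k
    using x(1) that unfolding lattice_box_def by blast
  have "c j k - r \<le> x j k \<and> x j k \<le> c j k + r" if "j < N" "k < d" for j k
    using bound[OF that] by (auto simp: abs_le_iff)
  then show "v \<in> (\<Pi>\<^sub>E p \<in> {..<N} \<times> {..<d}. {c (fst p) (snd p) - r .. c (fst p) (snd p) + r})"
    unfolding x(2) coords_def PiE_iff by auto
qed

lemma finite_lattice_box: "finite (lattice_box N d c r)"
  using finite_imageD[OF finite_subset[OF coords_box_subset] inj_on_coords_box]
  by (simp add: finite_PiE)

lemma card_lattice_box_le: "card (lattice_box N d c r) \<le> nat (2 * r + 1) ^ (N * d)"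
proof -
  have "card (lattice_box N d c r)
      \<le> card (\<Pi>\<^sub>E p \<in> {..<N} \<times> {..<d}. {c (fst p) (snd p) - r .. c (fst p) (snd p) + r})"
    using inj_on_coords_box coords_box_subset by (rule card_inj_on_le) (simp add: finite_PiE)
  also have "\<dots> = nat (2 * r + 1) ^ (N * d)"
    by (simp add: card_PiE card_cartesian_product)
  finally show ?thesis .
qed

definition neighbours :: "nat \<Rightarrow> nat \<Rightarrow> pt \<Rightarrow> pt set" where
  "neighbours N d x = {y \<in> conf N d. l1dist N d y x = 1}"

lemma coord_dist_le_l1dist: "j < N \<Longrightarrow> k < d \<Longrightarrow> \<bar>x j k - y j k\<bar> \<le> l1dist N d x y"
  unfolding l1dist_def
  by (rule order_trans[OF member_le_sum[of k] member_le_sum[of j]]) (auto intro: sum_nonneg)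

lemma l1dist_commute: "l1dist N d x y = l1dist N d y x"
  unfolding l1dist_def by (simp add: abs_minus_commute)

lemma neighbours_commute:
  "x \<in> conf N d \<Longrightarrow> y \<in> conf N d \<Longrightarrow> y \<in> neighbours N d x \<longleftrightarrow> x \<in> neighbours N d y"
  unfolding neighbours_def using l1dist_commute[of N d x y] by auto

lemma neighbours_subset_box: "neighbours N d x \<subseteq> lattice_box N d x 1"
proof
  fix y assume y: "y \<in> neighbours N d x"
  then have "\<bar>y j k - x j k\<bar> \<le> 1" if "j < N" "k < d" for j k
    using coord_dist_le_l1dist[OF that, of y x] by (simp add: neighbours_def)
  then show "y \<in> lattice_box N d x 1"
    using y by (simp add: neighbours_def lattice_box_def)
qed

lemma finite_neighbours: "finite (neighbours N d x)"
  using finite_subset[OF neighbours_subset_box finite_lattice_box] .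

lemma card_neighbours_le: "card (neighbours N d x) \<le> 3 ^ (N * d)"
proof -
  have "card (neighbours N d x) \<le> card (lattice_box N d x 1)"
    by (rule card_mono[OF finite_lattice_box neighbours_subset_box])
  also have "\<dots> \<le> 3 ^ (N * d)"
    using card_lattice_box_le[of N d x 1] by simp
  finally show ?thesis .
qed

context config_space
begin

lemma cube_subset_boxes: "cube N d R b \<subseteq> (\<Union>\<pi> \<in> {\<pi>. \<pi> permutes {..<N}}. lattice_box N d (perm_pt \<pi> b) \<lfloor>R\<rfloor>)"
proof
  fix x assume x: "x \<in> cube N d R b"
  obtain \<pi> where \<pi>: "\<pi> permutes {..<N}" "dS N d x b = supdist N d x (perm_pt \<pi> b)"
    using dS_attained by blast
  then have "supdist N d x (perm_pt \<pi> b) \<le> \<lfloor>R\<rfloor>"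
    using x by (simp add: cube_def le_floor_iff)
  then have "x \<in> lattice_box N d (perm_pt \<pi> b) \<lfloor>R\<rfloor>"
    using x coord_dist_le_supdist order_trans unfolding lattice_box_def cube_def by blast
  then show "x \<in> (\<Union>\<pi> \<in> {\<pi>. \<pi> permutes {..<N}}. lattice_box N d (perm_pt \<pi> b) \<lfloor>R\<rfloor>)"
    using \<pi>(1) by blast
qed

lemma finite_cube: "finite (cube N d R b)"
  by (intro finite_subset[OF cube_subset_boxes] finite_UN_I finite_permutations finite_lattice_box
      finite_lessThan)

lemma card_cube_le:
  assumes "0 \<le> R"
  shows "real (card (cube N d R b)) \<le> fact N * (2 * R + 1) ^ (N * d)"
proof -
  let ?P = "{\<pi>. \<pi> permutes {..<N}}"
  have "card (cube N d R b) \<le> card (\<Union>\<pi> \<in> ?P. lattice_box N d (perm_pt \<pi> b) \<lfloor>R\<rfloor>)"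
    by (intro card_mono cube_subset_boxes finite_UN_I finite_permutations
        finite_lattice_box) simp
  also have "\<dots> \<le> (\<Sum>\<pi> \<in> ?P. card (lattice_box N d (perm_pt \<pi> b) \<lfloor>R\<rfloor>))"
    by (rule card_UN_le) (simp add: finite_permutations)
  also have "\<dots> \<le> (\<Sum>\<pi> \<in> ?P. nat (2 * \<lfloor>R\<rfloor> + 1) ^ (N * d))"
    using card_lattice_box_le by (rule sum_mono)
  also have "\<dots> = fact N * nat (2 * \<lfloor>R\<rfloor> + 1) ^ (N * d)"
    using card_permutations[of "{..<N}" N] by simp
  finally have "real (card (cube N d R b)) \<le> real (fact N * nat (2 * \<lfloor>R\<rfloor> + 1) ^ (N * d))"
    by (simp only: of_nat_le_iff)
  also have "\<dots> = fact N * real (nat (2 * \<lfloor>R\<rfloor> + 1)) ^ (N * d)"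
    by (simp only: of_nat_mult of_nat_fact of_nat_power)
  also have "\<dots> \<le> fact N * (2 * R + 1) ^ (N * d)"
    using assms by (intro mult_left_mono power_mono) auto
  finally show ?thesis .
qed

lemma dS_neighbour_le_1:
  assumes "y \<in> neighbours N d x"
  shows "dS N d x y \<le> 1"
proof -
  have "supdist N d x y \<le> 1"
    using assms coord_dist_le_l1dist[of _ N _ d x y] l1dist_commute[of N d x y]
    by (intro supdist_leI) (simp add: neighbours_def)
  then show ?thesis using dS_le_supdist[of x y] by linarith
qed

lemma dS_neighbour_outside_cube:
  assumes "x \<in> cube N d R b" "y \<in> neighbours N d x" "y \<notin> cube N d R b"
  shows "dS N d x y = 1"
proof -
  have "\<not> dS N d x y < 1"
  proof
    assume "dS N d x y < 1"
    then have "dS N d y b \<le> R"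
      using dS_less_1_imp_0[of x y] dS_triangle[of y b x] dS_commute[of x y] assms(1)
      by (simp add: cube_def)
    then show False using assms(2,3) by (simp add: cube_def neighbours_def)
  qed
  then show ?thesis using dS_neighbour_le_1[OF assms(2)] by simp
qed

end

section \<open>Finite-dimensional spectral theory\<close>

definition sqnorm_l2 :: "pt set \<Rightarrow> (pt \<Rightarrow> complex) \<Rightarrow> real" where
  "sqnorm_l2 \<Theta> f = (\<Sum>x\<in>\<Theta>. (cmod (f x))\<^sup>2)"

lemma sum_fun_apply: "(\<Sum>v\<in>A. F v) x = (\<Sum>v\<in>A. F v x)"
  by (induction A rule: infinite_finite_induct) auto

lemma inner_l2_self: "inner_l2 \<Theta> f f = of_real (sqnorm_l2 \<Theta> f)"
  unfolding inner_l2_def sqnorm_l2_def by (simp only: of_real_sum complex_norm_square)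

lemma inner_l2_scale_left: "inner_l2 \<Theta> (\<lambda>x. c * f x) g = c * inner_l2 \<Theta> f g"
  unfolding inner_l2_def by (simp add: sum_distrib_left mult.assoc)

lemma inner_l2_scale_right: "inner_l2 \<Theta> f (\<lambda>x. c * g x) = cnj c * inner_l2 \<Theta> f g"
  unfolding inner_l2_def by (simp add: sum_distrib_left mult_ac)

lemma inner_l2_diff_left: "inner_l2 \<Theta> (\<lambda>x. f x - g x) h = inner_l2 \<Theta> f h - inner_l2 \<Theta> g h"
  unfolding inner_l2_def by (simp add: left_diff_distrib sum_subtractf)

lemma inner_l2_sum_left: "inner_l2 \<Theta> (\<lambda>x. \<Sum>j\<in>J. h j x) g = (\<Sum>j\<in>J. inner_l2 \<Theta> (h j) g)"
  unfolding inner_l2_def by (simp add: sum_distrib_right sum.swap[of _ J])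

lemma inner_l2_sum_right: "inner_l2 \<Theta> g (\<lambda>x. \<Sum>j\<in>J. h j x) = (\<Sum>j\<in>J. inner_l2 \<Theta> g (h j))"
  unfolding inner_l2_def by (simp add: sum_distrib_left sum.swap[of _ J])

lemma inner_l2_cong:
  "(\<And>x. x \<in> \<Theta> \<Longrightarrow> f x = f' x) \<Longrightarrow> (\<And>x. x \<in> \<Theta> \<Longrightarrow> g x = g' x) \<Longrightarrow>
    inner_l2 \<Theta> f g = inner_l2 \<Theta> f' g'"
  unfolding inner_l2_def by simp

lemma norm_inner_l2_le: "cmod (inner_l2 \<Theta> f g) \<le> (\<Sum>x\<in>\<Theta>. cmod (f x) * cmod (g x))"
  unfolding inner_l2_def by (rule order_trans[OF norm_sum]) (simp add: norm_mult)

lemma sqnorm_l2_nonneg: "0 \<le> sqnorm_l2 \<Theta> f"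
  unfolding sqnorm_l2_def by (simp add: sum_nonneg)

lemma sqnorm_l2_eq_0_iff: "finite \<Theta> \<Longrightarrow> sqnorm_l2 \<Theta> f = 0 \<longleftrightarrow> (\<forall>x\<in>\<Theta>. f x = 0)"
  unfolding sqnorm_l2_def by (subst sum_nonneg_eq_0_iff) auto

lemma sqnorm_l2_scale: "sqnorm_l2 \<Theta> (\<lambda>x. c * f x) = (cmod c)\<^sup>2 * sqnorm_l2 \<Theta> f"
  unfolding sqnorm_l2_def by (simp add: sum_distrib_left norm_mult power_mult_distrib)

lemma orthonormal_coeff:
  assumes orth: "\<forall>\<phi>\<in>B. \<forall>\<psi>\<in>B. inner_l2 \<Theta> \<phi> \<psi> = (if \<phi> = \<psi> then 1 else 0)"
    and "finite B" and "\<forall>x\<in>\<Theta>. f x = (\<Sum>\<phi>\<in>B. c \<phi> * \<phi> x)" and "\<phi>\<^sub>0 \<in> B"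
  shows "inner_l2 \<Theta> f \<phi>\<^sub>0 = c \<phi>\<^sub>0"
proof -
  have "inner_l2 \<Theta> f \<phi>\<^sub>0 = inner_l2 \<Theta> (\<lambda>x. \<Sum>\<phi>\<in>B. c \<phi> * \<phi> x) \<phi>\<^sub>0"
    using assms(3) unfolding inner_l2_def by (intro sum.cong) auto
  also have "\<dots> = (\<Sum>\<phi>\<in>B. c \<phi> * inner_l2 \<Theta> \<phi> \<phi>\<^sub>0)"
    by (simp add: inner_l2_sum_left inner_l2_scale_left)
  also have "\<dots> = (\<Sum>\<phi>\<in>B. if \<phi> = \<phi>\<^sub>0 then c \<phi> else 0)"
    using orth assms(4) by (intro sum.cong) auto
  also have "\<dots> = c \<phi>\<^sub>0" using assms(2,4) by simp
  finally show ?thesis .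
qed

text \<open>Both cardinalities equal \<open>\<Sum>\<phi>\<in>B. \<Sum>x\<in>\<Theta>. |\<phi> x|\<^sup>2\<close>: the rows of this matrix are normalized by
  orthonormality, its columns because \<open>B\<close> spans the point masses.\<close>

lemma orthonormal_basis_card:
  assumes fin: "finite \<Theta>" and finB: "finite B"
    and orth: "\<forall>\<phi>\<in>B. \<forall>\<psi>\<in>B. inner_l2 \<Theta> \<phi> \<psi> = (if \<phi> = \<psi> then 1 else 0)"
    and spans: "\<forall>f. supp_in \<Theta> f \<longrightarrow> (\<exists>c. \<forall>x\<in>\<Theta>. f x = (\<Sum>\<phi>\<in>B. c \<phi> * \<phi> x))"
  shows "card B = card \<Theta>"
proof -
  have column: "(\<Sum>\<phi>\<in>B. (cmod (\<phi> x))\<^sup>2) = 1" if x: "x \<in> \<Theta>" for x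
  proof -
    let ?\<delta> = "\<lambda>y. if y = x then (1::complex) else 0"
    have "supp_in \<Theta> ?\<delta>" using x by (simp add: supp_in_def)
    then obtain c where c: "\<forall>y\<in>\<Theta>. ?\<delta> y = (\<Sum>\<phi>\<in>B. c \<phi> * \<phi> y)"
      using spans by blast
    have "c \<phi> = cnj (\<phi> x)" if "\<phi> \<in> B" for \<phi>
      using orthonormal_coeff[OF orth finB c that] fin x
      by (simp add: inner_l2_def if_distrib[of "\<lambda>t. t * _"] cong: if_cong)
    then have "(1::complex) = (\<Sum>\<phi>\<in>B. \<phi> x * cnj (\<phi> x))"
      using c x by (force simp: mult.commute intro: sum.cong)
    also have "\<dots> = of_real (\<Sum>\<phi>\<in>B. (cmod (\<phi> x))\<^sup>2)"
      by (simp only: of_real_sum complex_norm_square)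
    finally show ?thesis by (metis of_real_eq_1_iff)
  qed
  have row: "sqnorm_l2 \<Theta> \<phi> = 1" if "\<phi> \<in> B" for \<phi>
    using orth that inner_l2_self[of \<Theta> \<phi>] by (metis of_real_eq_1_iff)
  have "real (card B) = (\<Sum>\<phi>\<in>B. \<Sum>x\<in>\<Theta>. (cmod (\<phi> x))\<^sup>2)"
    using row by (simp add: sqnorm_l2_def)
  also have "\<dots> = (\<Sum>x\<in>\<Theta>. \<Sum>\<phi>\<in>B. (cmod (\<phi> x))\<^sup>2)" by (rule sum.swap)
  also have "\<dots> = real (card \<Theta>)" using column by simp
  finally show ?thesis by simp
qed

locale hermitian_operator =
  fixes Th :: "pt set" and T :: "(pt \<Rightarrow> complex) \<Rightarrow> pt \<Rightarrow> complex"
  assumes finite_Th: "finite Th"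
    and T_add: "\<And>f g. T (\<lambda>x. f x + g x) = (\<lambda>x. T f x + T g x)"
    and T_scale: "\<And>c f. T (\<lambda>x. c * f x) = (\<lambda>x. c * T f x)"
    and T_outside: "\<And>f x. x \<notin> Th \<Longrightarrow> T f x = 0"
    and T_hermitian: "\<And>f g. inner_l2 Th (T f) g = inner_l2 Th f (T g)"
begin

definition eigenfun :: "(pt \<Rightarrow> complex) \<Rightarrow> complex \<Rightarrow> bool" where
  "eigenfun f z \<longleftrightarrow> supp_in Th f \<and> (\<forall>x\<in>Th. T f x = z * f x)"

text \<open>Indexing the components by their eigenvalues makes them pairwise orthogonal.\<close>

definition eigen_decomposable :: "(pt \<Rightarrow> complex) \<Rightarrow> bool" where
  "eigen_decomposable f \<longleftrightarrow>
     (\<exists>L g. finite L \<and> (\<forall>z\<in>L. eigenfun (g z) z) \<and> f = (\<lambda>x. \<Sum>z\<in>L. g z x))"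

lemma T_zero: "T (\<lambda>x. 0) = (\<lambda>x. 0)"
  using T_scale[of 0 "\<lambda>x. 0"] by simp

lemma T_diff: "T (\<lambda>x. f x - g x) = (\<lambda>x. T f x - T g x)"
  using T_add[of f "\<lambda>x. - g x"] T_scale[of "-1" g] by simp

lemma T_sum: "finite J \<Longrightarrow> T (\<lambda>x. \<Sum>j\<in>J. h j x) = (\<lambda>x. \<Sum>j\<in>J. T (h j) x)"
  by (induction J rule: finite_induct) (simp_all add: T_zero T_add)

lemma supp_in_T: "supp_in Th (T f)"
  unfolding supp_in_def using T_outside by auto

lemma eigenvalue_real:
  assumes "eigenfun f z" "\<exists>x\<in>Th. f x \<noteq> 0"
  shows "cnj z = z"
proof -
  have "inner_l2 Th (T f) f = z * of_real (sqnorm_l2 Th f)"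
    using assms(1) unfolding eigenfun_def
    by (simp add: inner_l2_cong[of Th "T f" "\<lambda>x. z * f x" f f] inner_l2_scale_left inner_l2_self)
  moreover have "inner_l2 Th f (T f) = cnj z * of_real (sqnorm_l2 Th f)"
    using assms(1) unfolding eigenfun_def
    by (simp add: inner_l2_cong[of Th f f "T f" "\<lambda>x. z * f x"] inner_l2_scale_right inner_l2_self)
  moreover have "sqnorm_l2 Th f \<noteq> 0"
    using assms(2) sqnorm_l2_eq_0_iff[OF finite_Th] by blast
  ultimately show ?thesis using T_hermitian[of f f] by simp
qed

lemma eigenfun_orthogonal:
  assumes "eigenfun f z" "eigenfun g w" "z \<noteq> w"
  shows "inner_l2 Th f g = 0"
proof (cases "\<exists>x\<in>Th. g x \<noteq> 0")
  case False
  then show ?thesis unfolding inner_l2_def by simp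
next
  case True
  have "inner_l2 Th (T f) g = z * inner_l2 Th f g"
    using assms(1) unfolding eigenfun_def inner_l2_def by (simp add: sum_distrib_left mult.assoc)
  moreover have "inner_l2 Th f (T g) = w * inner_l2 Th f g"
    using assms(2) eigenvalue_real[OF assms(2) True] unfolding eigenfun_def
    by (simp add: inner_l2_cong[of Th f f "T g" "\<lambda>x. w * g x"] inner_l2_scale_right)
  ultimately have "z * inner_l2 Th f g = w * inner_l2 Th f g"
    using T_hermitian[of f g] by metis
  then show ?thesis using assms(3) by simp
qed

lemma eigenfun_scale: "eigenfun f z \<Longrightarrow> eigenfun (\<lambda>x. c * f x) z"
  unfolding eigenfun_def supp_in_def by (simp add: T_scale)

lemma sqnorm_l2_sum_eigenfuns:
  assumes "finite L" "\<forall>z\<in>L. eigenfun (g z) z"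
  shows "sqnorm_l2 Th (\<lambda>x. \<Sum>z\<in>L. g z x) = (\<Sum>z\<in>L. sqnorm_l2 Th (g z))"
proof -
  have "of_real (sqnorm_l2 Th (\<lambda>x. \<Sum>z\<in>L. g z x))
      = (\<Sum>z\<in>L. \<Sum>w\<in>L. inner_l2 Th (g z) (g w))"
    by (simp add: inner_l2_self[symmetric] inner_l2_sum_left inner_l2_sum_right)
  also have "\<dots> = (\<Sum>z\<in>L. \<Sum>w\<in>L. if w = z then inner_l2 Th (g z) (g z) else 0)"
    using assms(2) by (intro sum.cong refl) (metis eigenfun_orthogonal)
  also have "\<dots> = of_real (\<Sum>z\<in>L. sqnorm_l2 Th (g z))"
    using assms(1) by (simp add: inner_l2_self)
  finally show ?thesis by (simp only: of_real_eq_iff)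
qed

end

interpretation fun_vs: vector_space "\<lambda>(c::complex) (f::pt \<Rightarrow> complex). (\<lambda>x. c * f x)"
  by unfold_locales (auto simp: plus_fun_def algebra_simps)

context hermitian_operator
begin

definition poly_op :: "complex poly \<Rightarrow> (pt \<Rightarrow> complex) \<Rightarrow> pt \<Rightarrow> complex" where
  "poly_op p f = (\<lambda>x. \<Sum>i\<le>degree p. coeff p i * (T ^^ i) f x)"

lemma funpow_T_add: "(T ^^ i) (\<lambda>x. f x + g x) = (\<lambda>x. (T ^^ i) f x + (T ^^ i) g x)"
  by (induction i) (simp_all add: T_add)

lemma funpow_T_scale: "(T ^^ i) (\<lambda>x. c * f x) = (\<lambda>x. c * (T ^^ i) f x)"
  by (induction i) (simp_all add: T_scale)

lemma supp_in_funpow_T: "supp_in Th f \<Longrightarrow> supp_in Th ((T ^^ i) f)"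
  by (cases i) (simp_all add: supp_in_T)

lemma poly_op_eq_sum: "degree p \<le> k \<Longrightarrow> poly_op p f = (\<lambda>x. \<Sum>i\<le>k. coeff p i * (T ^^ i) f x)"
  unfolding poly_op_def by (intro ext sum.mono_neutral_left) (auto simp: coeff_eq_0)

lemma poly_op_add: "poly_op (p + q) f = (\<lambda>x. poly_op p f x + poly_op q f x)"
proof -
  let ?k = "max (degree p) (degree q)"
  have "degree (p + q) \<le> ?k" by (rule degree_add_le) auto
  then show ?thesis
    using poly_op_eq_sum[of p ?k f] poly_op_eq_sum[of q ?k f] poly_op_eq_sum[of "p + q" ?k f]
    by (simp add: distrib_right sum.distrib)
qed

lemma poly_op_smult: "poly_op (smult c p) f = (\<lambda>x. c * poly_op p f x)"
  using poly_op_eq_sum[of "smult c p" "degree p" f] poly_op_eq_sum[of p "degree p" f]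
  by (simp add: sum_distrib_left mult.assoc)

lemma poly_op_pCons_0: "poly_op (pCons 0 p) f = T (poly_op p f)"
proof -
  have "poly_op (pCons 0 p) f = (\<lambda>x. \<Sum>i\<le>Suc (degree p). coeff (pCons 0 p) i * (T ^^ i) f x)"
    by (rule poly_op_eq_sum) (simp add: degree_pCons_le)
  also have "\<dots> = (\<lambda>x. \<Sum>i\<le>degree p. coeff p i * T ((T ^^ i) f) x)"
    by (rule ext, subst sum.atMost_Suc_shift) (simp del: sum.atMost_Suc)
  also have "\<dots> = T (poly_op p f)"
    by (simp add: poly_op_def T_sum T_scale)
  finally show ?thesis .
qed

lemma poly_op_const: "poly_op [:c:] f = (\<lambda>x. c * f x)"
  unfolding poly_op_def by simp

lemma poly_op_T_shift: "poly_op q (\<lambda>x. T f x - a * f x) = (\<lambda>x. T (poly_op q f) x - a * poly_op q f x)"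
proof -
  have "(T ^^ i) (\<lambda>x. T f x - a * f x) = (\<lambda>x. T ((T ^^ i) f) x - a * (T ^^ i) f x)" for i
    using funpow_T_add[of i "T f" "\<lambda>x. - a * f x"] funpow_T_scale[of i "- a" f]
    by (simp add: funpow_swap1)
  then show ?thesis
    by (simp add: poly_op_def T_sum T_scale sum_subtractf sum_distrib_left algebra_simps)
qed

lemma poly_op_linear_factor: "poly_op ([:- a, 1:] * q) f = poly_op q (\<lambda>x. T f x - a * f x)"
proof -
  have split: "[:- a, 1:] * q = smult (- a) q + pCons 0 q" by (simp add: mult_pCons_left)
  show ?thesis
    unfolding split poly_op_add poly_op_smult poly_op_pCons_0 poly_op_T_shift by simp
qed

lemma inner_l2_sum_eigenfuns:
  assumes "finite L" "\<forall>w\<in>L. eigenfun (g w) w" "z \<in> L"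
  shows "inner_l2 Th (\<lambda>x. \<Sum>w\<in>L. g w x) (g z) = of_real (sqnorm_l2 Th (g z))"
proof -
  have "inner_l2 Th (\<lambda>x. \<Sum>w\<in>L. g w x) (g z) = (\<Sum>w\<in>L. if w = z then inner_l2 Th (g z) (g z) else 0)"
    unfolding inner_l2_sum_left using assms(2,3) by (intro sum.cong refl) (metis eigenfun_orthogonal)
  then show ?thesis using assms(1,3) by (simp add: inner_l2_self)
qed

lemma inner_l2_shift_eigenfun:
  assumes "eigenfun e z" "\<exists>x\<in>Th. e x \<noteq> 0"
  shows "inner_l2 Th (\<lambda>x. T f x - z * f x) e = 0"
proof -
  have "inner_l2 Th (T f) e = inner_l2 Th f (\<lambda>x. z * e x)"
    using assms(1) unfolding T_hermitian eigenfun_def by (intro inner_l2_cong) auto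
  then show ?thesis
    using eigenvalue_real[OF assms]
    by (simp add: inner_l2_diff_left inner_l2_scale_left inner_l2_scale_right)
qed

lemma eigen_decomposition_nonzero:
  assumes "eigen_decomposable h"
  obtains L g where "finite L" "\<forall>w\<in>L. eigenfun (g w) w \<and> (\<exists>x\<in>Th. g w x \<noteq> 0)"
    "h = (\<lambda>x. \<Sum>w\<in>L. g w x)"
proof -
  obtain L g where L: "finite L" "\<forall>w\<in>L. eigenfun (g w) w" and h: "h = (\<lambda>x. \<Sum>w\<in>L. g w x)"
    using assms unfolding eigen_decomposable_def by blast
  define L' where "L' = {w\<in>L. \<exists>x\<in>Th. g w x \<noteq> 0}"
  have "(\<Sum>w\<in>L. g w x) = (\<Sum>w\<in>L'. g w x)" for x
    using L unfolding L'_def eigenfun_def supp_in_def by (intro sum.mono_neutral_right) auto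
  then have "h = (\<lambda>x. \<Sum>w\<in>L'. g w x)" using h by simp
  moreover have "finite L'" using L(1) by (simp add: L'_def)
  moreover have "\<forall>w\<in>L'. eigenfun (g w) w \<and> (\<exists>x\<in>Th. g w x \<noteq> 0)"
    using L(2) by (simp add: L'_def)
  ultimately show ?thesis by (intro that)
qed

lemma shift_not_in_eigen_decomposition:
  assumes "finite L" and g: "\<forall>w\<in>L. eigenfun (g w) w \<and> (\<exists>x\<in>Th. g w x \<noteq> 0)"
    and h: "(\<lambda>x. T f x - z * f x) = (\<lambda>x. \<Sum>w\<in>L. g w x)"
  shows "z \<notin> L"
proof
  assume z: "z \<in> L"
  then have "of_real (sqnorm_l2 Th (g z)) = (0::complex)"
    using inner_l2_sum_eigenfuns[OF \<open>finite L\<close> _ z, of g] inner_l2_shift_eigenfun[of "g z" z f] g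
    by (simp flip: h)
  then show False using g z sqnorm_l2_eq_0_iff[OF finite_Th] by auto
qed

text \<open>Solving \<open>T f' - z f' = \<Sum>\<^sub>w g w\<close> componentwise by \<open>f' = \<Sum>\<^sub>w g w / (w - z)\<close> leaves an
  eigenfunction for \<open>z\<close>.\<close>

lemma eigenfun_shift_remainder:
  assumes f: "supp_in Th f" and "finite L" and g: "\<forall>w\<in>L. eigenfun (g w) w" and "z \<notin> L"
    and h: "\<forall>x\<in>Th. T f x - z * f x = (\<Sum>w\<in>L. g w x)"
  shows "eigenfun (\<lambda>x. f x - (\<Sum>w\<in>L. inverse (w - z) * g w x)) z"
proof -
  define c where "c w = inverse (w - z)" for w
  define f' where "f' = (\<lambda>x. \<Sum>w\<in>L. c w * g w x)"
  have scaled: "eigenfun (\<lambda>x. c w * g w x) w" if "w \<in> L" for w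
    using g that eigenfun_scale by blast
  have shift: "T f' x - z * f' x = T f x - z * f x" if x: "x \<in> Th" for x
  proof -
    have "T f' x - z * f' x = (\<Sum>w\<in>L. (w - z) * (c w * g w x))"
      using scaled x
      by (simp add: f'_def T_sum[OF \<open>finite L\<close>] eigenfun_def sum_subtractf sum_distrib_left
          algebra_simps)
    also have "\<dots> = (\<Sum>w\<in>L. g w x)"
    proof (intro sum.cong refl)
      fix w assume "w \<in> L"
      then have "w - z \<noteq> 0" using \<open>z \<notin> L\<close> by auto
      then show "(w - z) * (c w * g w x) = g w x" by (simp add: c_def)
    qed
    finally show ?thesis using h x by simp
  qed
  have "T (\<lambda>x. f x - f' x) x = z * (f x - f' x)" if "x \<in> Th" for x
    using shift[OF that] unfolding T_diff by algebra
  moreover have "supp_in Th (\<lambda>x. f x - f' x)"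
    using f g unfolding f'_def supp_in_def eigenfun_def by (auto intro!: sum.neutral)
  ultimately show ?thesis
    unfolding eigenfun_def f'_def c_def by blast
qed

lemma eigen_decomposable_of_shift:
  assumes f: "supp_in Th f" and shift: "eigen_decomposable (\<lambda>x. T f x - z * f x)"
  shows "eigen_decomposable f"
proof -
  obtain L g where L: "finite L" and g: "\<forall>w\<in>L. eigenfun (g w) w \<and> (\<exists>x\<in>Th. g w x \<noteq> 0)"
    and h: "(\<lambda>x. T f x - z * f x) = (\<lambda>x. \<Sum>w\<in>L. g w x)"
    using eigen_decomposition_nonzero[OF shift] by blast
  have z: "z \<notin> L" by (rule shift_not_in_eigen_decomposition[OF L g h])
  define G where "G w = (if w = z then (\<lambda>x. f x - (\<Sum>w\<in>L. inverse (w - z) * g w x))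
    else (\<lambda>x. inverse (w - z) * g w x))" for w
  have "\<forall>w\<in>insert z L. eigenfun (G w) w"
    using eigenfun_shift_remainder[OF f L _ z] g eigenfun_scale h z
    by (auto simp: G_def fun_eq_iff)
  moreover have "f = (\<lambda>x. \<Sum>w\<in>insert z L. G w x)"
  proof
    fix x
    have "(\<Sum>w\<in>L. G w x) = (\<Sum>w\<in>L. inverse (w - z) * g w x)"
      using z by (intro sum.cong refl) (auto simp: G_def)
    then show "f x = (\<Sum>w\<in>insert z L. G w x)" using L z by (simp add: G_def)
  qed
  ultimately show ?thesis
    unfolding eigen_decomposable_def using L by blast
qed

lemma eigen_decomposable_of_annihilated:
  "p \<noteq> 0 \<Longrightarrow> supp_in Th f \<Longrightarrow> poly_op p f = (\<lambda>x. 0) \<Longrightarrow> eigen_decomposable f"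
proof (induction "degree p" arbitrary: p f rule: less_induct)
  case less
  show ?case
  proof (cases "degree p = 0")
    case True
    then obtain c where "p = [:c:]" "c \<noteq> 0" using less.prems(1) by (metis degree_eq_zeroE pCons_0_0)
    then have "f = (\<lambda>x. 0)" using less.prems(3) by (simp add: poly_op_const fun_eq_iff)
    then show ?thesis
      unfolding eigen_decomposable_def by (intro exI[of _ "{}"]) simp
  next
    case False
    then have "\<not> constant (poly p)" by (simp add: constant_degree)
    then obtain z where "poly p z = 0"
      using fundamental_theorem_of_algebra by blast
    then obtain q where q: "p = [:- z, 1:] * q"
      by (metis dvdE poly_eq_0_iff_dvd)
    with less.prems(1) have "q \<noteq> 0" by auto
    then have "degree q < degree p"
      unfolding q by (subst degree_mult_eq) simp_all
    moreover have "poly_op q (\<lambda>x. T f x - z * f x) = (\<lambda>x. 0)"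
      using less.prems(3) unfolding q poly_op_linear_factor .
    moreover have "supp_in Th (\<lambda>x. T f x - z * f x)"
      using less.prems(2) supp_in_T[of f] unfolding supp_in_def by auto
    ultimately show ?thesis
      using less.hyps[OF \<open>degree q < degree p\<close> \<open>q \<noteq> 0\<close>]
        eigen_decomposable_of_shift[OF less.prems(2)] by blast
  qed
qed

lemma supp_in_span_indicators:
  assumes "supp_in Th f"
  shows "f \<in> fun_vs.span ((\<lambda>y x. if x = y then 1 else 0) ` Th)"
proof -
  have "f = (\<Sum>y\<in>Th. (\<lambda>x. f y * (if x = y then 1 else 0)))"
    using assms finite_Th unfolding supp_in_def
    by (auto simp: sum_fun_apply if_distrib[of "\<lambda>t. f _ * t"] sum.delta' cong: if_cong)
  also have "\<dots> \<in> fun_vs.span ((\<lambda>y x. if x = y then 1 else 0) ` Th)"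
    by (intro fun_vs.span_sum fun_vs.span_scale[where c = "f _", simplified] fun_vs.span_base) auto
  finally show ?thesis .
qed

lemma card_independent_le:
  assumes "\<forall>f\<in>S. supp_in Th f" "fun_vs.independent S"
  shows "card S \<le> card Th"
proof -
  have "card S \<le> card ((\<lambda>y x. if x = y then (1::complex) else 0) ` Th)"
    using fun_vs.independent_span_bound[OF finite_imageI[OF finite_Th] assms(2)]
      supp_in_span_indicators assms(1) by blast
  also have "\<dots> \<le> card Th" by (rule card_image_le[OF finite_Th])
  finally show ?thesis .
qed

lemma annihilating_poly_of_repetition:
  assumes "(T ^^ i) f = (T ^^ j) f" "i \<noteq> j"
  shows "\<exists>p. p \<noteq> 0 \<and> poly_op p f = (\<lambda>x. 0)"
proof (intro exI conjI)
  let ?p = "monom (1::complex) i - monom 1 j"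
  show "?p \<noteq> 0"
    using assms(2) by (metis coeff_diff coeff_monom diff_zero eq_iff_diff_eq_0 zero_neq_one)
  have "degree ?p \<le> max i j"
    by (rule degree_le) (auto simp: coeff_monom)
  then have "poly_op ?p f = (\<lambda>x. (\<Sum>k\<le>max i j. if k = i then (T ^^ k) f x else 0)
      - (\<Sum>k\<le>max i j. if k = j then (T ^^ k) f x else 0))"
    by (simp add: poly_op_eq_sum coeff_monom left_diff_distrib sum_subtractf
        if_distrib[of "\<lambda>a. a * _"] cong: if_cong)
  also have "\<dots> = (\<lambda>x. 0)"
    using assms(1) by (simp add: sum.delta')
  finally show "poly_op ?p f = (\<lambda>x. 0)" .
qed

lemma annihilating_poly_of_dependence:
  fixes f :: "pt \<Rightarrow> complex"
  defines "v \<equiv> \<lambda>i. (T ^^ i) f"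
  assumes inj: "inj_on v {..n}" and dep: "fun_vs.dependent (v ` {..n})"
  shows "\<exists>p. p \<noteq> 0 \<and> poly_op p f = (\<lambda>x. 0)"
proof -
  obtain t u where t: "finite t" "t \<subseteq> v ` {..n}"
    and sum_t: "(\<Sum>w\<in>t. (\<lambda>x. u w * w x)) = 0" and nz: "\<exists>w\<in>t. u w \<noteq> 0"
    using dep unfolding fun_vs.dependent_explicit by blast
  define c where "c i = (if v i \<in> t then u (v i) else 0)" for i
  define p where "p = (\<Sum>i\<le>n. monom (c i) i)"
  have coeff_p: "coeff p k = (if k \<le> n then c k else 0)" for k
    unfolding p_def by (simp add: coeff_sum coeff_monom sum.delta')
  have "p \<noteq> 0"
  proof
    assume "p = 0"
    obtain w where w: "w \<in> t" "u w \<noteq> 0" using nz by blast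
    then obtain i where "i \<le> n" "w = v i" using t(2) by blast
    then show False using coeff_p[of i] w \<open>p = 0\<close> by (simp add: c_def)
  qed
  moreover have "poly_op p f = (\<lambda>x. 0)"
  proof
    fix x
    have "poly_op p f x = (\<Sum>i\<le>n. c i * v i x)"
      using poly_op_eq_sum[of p n f] coeff_p unfolding v_def by (simp add: degree_le)
    also have "\<dots> = (\<Sum>i\<le>n. if v i \<in> t then u (v i) * v i x else 0)"
      by (rule sum.cong) (auto simp: c_def)
    also have "\<dots> = (\<Sum>i\<in>{i\<in>{..n}. v i \<in> t}. u (v i) * v i x)"
      by (rule sum.inter_filter[symmetric]) simp
    also have "\<dots> = (\<Sum>w\<in>v ` {i\<in>{..n}. v i \<in> t}. u w * w x)"
      by (rule sum.reindex[symmetric, unfolded comp_def]) (rule inj_on_subset[OF inj], auto)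
    also have "v ` {i\<in>{..n}. v i \<in> t} = t" using t(2) by auto
    finally show "poly_op p f x = 0"
      using fun_cong[OF sum_t, of x] by (simp add: sum_fun_apply)
  qed
  ultimately show ?thesis by blast
qed

text \<open>The \<open>card Th + 1\<close> Krylov vectors \<open>T\<^sup>i f\<close>, \<open>i \<le> card Th\<close>, live in a space of dimension
  \<open>card Th\<close>, so they are either not distinct or linearly dependent.\<close>

lemma annihilating_poly_exists:
  assumes "supp_in Th f"
  shows "\<exists>p. p \<noteq> 0 \<and> poly_op p f = (\<lambda>x. 0)"
proof (cases "inj_on (\<lambda>i. (T ^^ i) f) {..card Th}")
  case True
  have "\<not> fun_vs.independent ((\<lambda>i. (T ^^ i) f) ` {..card Th})"
  proof
    assume "fun_vs.independent ((\<lambda>i. (T ^^ i) f) ` {..card Th})"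
    moreover have "\<forall>g\<in>(\<lambda>i. (T ^^ i) f) ` {..card Th}. supp_in Th g"
      using supp_in_funpow_T[OF assms] by blast
    ultimately have "card ((\<lambda>i. (T ^^ i) f) ` {..card Th}) \<le> card Th"
      by (intro card_independent_le)
    then show False using card_image[OF True] by simp
  qed
  then show ?thesis using annihilating_poly_of_dependence[OF True] by blast
next
  case False
  then obtain i j where "(T ^^ i) f = (T ^^ j) f" "i \<noteq> j"
    unfolding inj_on_def by blast
  then show ?thesis by (rule annihilating_poly_of_repetition)
qed

theorem spectral_decomposition: "supp_in Th f \<Longrightarrow> eigen_decomposable f"
  using annihilating_poly_exists eigen_decomposable_of_annihilated by blast

lemma gap_sqnorm_bound:
  assumes "0 < \<delta>"
    and gap: "\<And>f z. eigenfun f z \<Longrightarrow> \<exists>x\<in>Th. f x \<noteq> 0 \<Longrightarrow> \<delta> \<le> cmod (z - \<mu>)"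
    and F: "supp_in Th F"
  shows "\<delta>\<^sup>2 * sqnorm_l2 Th F \<le> sqnorm_l2 Th (\<lambda>x. T F x - \<mu> * F x)"
proof -
  obtain L g where L: "finite L" and g: "\<forall>z\<in>L. eigenfun (g z) z \<and> (\<exists>x\<in>Th. g z x \<noteq> 0)"
    and F_sum: "F = (\<lambda>x. \<Sum>z\<in>L. g z x)"
    using eigen_decomposition_nonzero[OF spectral_decomposition[OF F]] by blast
  have "T F x - \<mu> * F x = (\<Sum>z\<in>L. (z - \<mu>) * g z x)" if "x \<in> Th" for x
    using g that
    by (simp add: F_sum T_sum[OF L] eigenfun_def sum_subtractf sum_distrib_left left_diff_distrib)
  then have "sqnorm_l2 Th (\<lambda>x. T F x - \<mu> * F x) = sqnorm_l2 Th (\<lambda>x. \<Sum>z\<in>L. (z - \<mu>) * g z x)"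
    unfolding sqnorm_l2_def by simp
  also have "\<dots> = (\<Sum>z\<in>L. (cmod (z - \<mu>))\<^sup>2 * sqnorm_l2 Th (g z))"
    using g eigenfun_scale by (simp add: sqnorm_l2_sum_eigenfuns[OF L] sqnorm_l2_scale)
  also have "\<dots> \<ge> (\<Sum>z\<in>L. \<delta>\<^sup>2 * sqnorm_l2 Th (g z))"
    using g gap assms(1) by (intro sum_mono mult_right_mono power_mono sqnorm_l2_nonneg) auto
  finally show ?thesis
    using g by (simp add: F_sum sqnorm_l2_sum_eigenfuns[OF L] sum_distrib_left)
qed

end

section \<open>The restricted Hamiltonian\<close>

lemma Hrestr_inside:
  "x \<in> \<Theta> \<Longrightarrow> Hrestr N d lam calV calU \<Theta> \<phi> x =
    of_real (lam * potV N calV x + potU N calU x) * \<phi> x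
    - (\<Sum>y\<in>neighbours N d x. if y \<in> \<Theta> then \<phi> y else 0)"
  unfolding Hrestr_def neighbours_def by simp

lemma Hrestr_outside: "x \<notin> \<Theta> \<Longrightarrow> Hrestr N d lam calV calU \<Theta> \<phi> x = 0"
  by (simp add: Hrestr_def)

definition hamiltonian_kernel ::
    "nat \<Rightarrow> nat \<Rightarrow> real \<Rightarrow> ((nat \<Rightarrow> int) \<Rightarrow> real) \<Rightarrow> ((nat \<Rightarrow> int) \<Rightarrow> real) \<Rightarrow> pt \<Rightarrow> pt \<Rightarrow> complex" where
  "hamiltonian_kernel N d lam calV calU x y =
     (if y = x then of_real (lam * potV N calV x + potU N calU x) else 0)
     - (if y \<in> neighbours N d x then 1 else 0)"

lemma Hrestr_eq_kernel_sum:
  assumes "finite \<Theta>" "x \<in> \<Theta>"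
  shows "Hrestr N d lam calV calU \<Theta> \<phi> x = (\<Sum>y\<in>\<Theta>. hamiltonian_kernel N d lam calV calU x y * \<phi> y)"
proof -
  have "(\<Sum>y\<in>neighbours N d x. if y \<in> \<Theta> then \<phi> y else 0) = (\<Sum>y\<in>\<Theta>. if y \<in> neighbours N d x then \<phi> y else 0)"
    using assms(1) finite_neighbours by (simp add: sum.inter_restrict[symmetric] Int_commute)
  then show ?thesis
    using assms unfolding Hrestr_def hamiltonian_kernel_def
    by (simp add: left_diff_distrib sum_subtractf if_distrib[of "\<lambda>t. t * _"] neighbours_def
        cong: if_cong)
qed

lemma cnj_hamiltonian_kernel:
  "x \<in> conf N d \<Longrightarrow> y \<in> conf N d \<Longrightarrow>
    cnj (hamiltonian_kernel N d lam calV calU x y) = hamiltonian_kernel N d lam calV calU y x"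
  unfolding hamiltonian_kernel_def using neighbours_commute[of x N d y] by auto

lemma hermitian_operator_Hrestr:
  assumes fin: "finite \<Theta>" and sub: "\<Theta> \<subseteq> conf N d"
  shows "hermitian_operator \<Theta> (Hrestr N d lam calV calU \<Theta>)"
proof
  let ?H = "Hrestr N d lam calV calU \<Theta>" and ?K = "hamiltonian_kernel N d lam calV calU"
  show "finite \<Theta>" by fact
  show "?H (\<lambda>x. f x + g x) = (\<lambda>x. ?H f x + ?H g x)" for f g
  proof
    fix x show "?H (\<lambda>x. f x + g x) x = ?H f x + ?H g x"
      by (cases "x \<in> \<Theta>")
        (simp_all add: Hrestr_eq_kernel_sum[OF fin] distrib_left sum.distrib Hrestr_outside)
  qed
  show "?H (\<lambda>x. c * f x) = (\<lambda>x. c * ?H f x)" for c f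
  proof
    fix x show "?H (\<lambda>x. c * f x) x = c * ?H f x"
      by (cases "x \<in> \<Theta>")
        (simp_all add: Hrestr_eq_kernel_sum[OF fin] sum_distrib_left mult_ac Hrestr_outside)
  qed
  show "x \<notin> \<Theta> \<Longrightarrow> ?H f x = 0" for f x
    by (rule Hrestr_outside)
  show "inner_l2 \<Theta> (?H f) g = inner_l2 \<Theta> f (?H g)" for f g
  proof -
    have "inner_l2 \<Theta> (?H f) g = (\<Sum>x\<in>\<Theta>. \<Sum>y\<in>\<Theta>. ?K x y * f y * cnj (g x))"
      by (simp add: inner_l2_def Hrestr_eq_kernel_sum[OF fin] sum_distrib_right)
    also have "\<dots> = (\<Sum>y\<in>\<Theta>. \<Sum>x\<in>\<Theta>. f y * cnj (?K y x * g x))"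
      using sub cnj_hamiltonian_kernel
      by (subst sum.swap) (intro sum.cong refl, auto simp: mult_ac subset_iff)
    also have "\<dots> = inner_l2 \<Theta> f (?H g)"
      by (simp add: inner_l2_def Hrestr_eq_kernel_sum[OF fin] sum_distrib_left)
    finally show ?thesis .
  qed
qed

lemma Hrestr_gap_sqnorm_bound:
  assumes fin: "finite \<Theta>" and sub: "\<Theta> \<subseteq> conf N d" and "0 < \<delta>"
    and gap: "\<forall>e\<in>spec N d lam calV calU \<Theta>. \<delta> \<le> \<bar>\<mu> - e\<bar>" and F: "supp_in \<Theta> F"
  shows "\<delta>\<^sup>2 * sqnorm_l2 \<Theta> F \<le> sqnorm_l2 \<Theta> (\<lambda>x. Hrestr N d lam calV calU \<Theta> F x - of_real \<mu> * F x)"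
proof -
  interpret H: hermitian_operator \<Theta> "Hrestr N d lam calV calU \<Theta>"
    by (rule hermitian_operator_Hrestr[OF fin sub])
  show ?thesis
  proof (rule H.gap_sqnorm_bound[OF \<open>0 < \<delta>\<close> _ F])
    fix f z assume f: "H.eigenfun f z" "\<exists>x\<in>\<Theta>. f x \<noteq> 0"
    then have "z \<in> \<real>"
      using H.eigenvalue_real by (simp add: Reals_cnj_iff)
    then obtain r where z: "z = of_real r" by (auto elim: Reals_cases)
    then have "is_eigenpair N d lam calV calU \<Theta> f r"
      using f unfolding is_eigenpair_def H.eigenfun_def by simp
    then have "\<delta> \<le> \<bar>\<mu> - r\<bar>"
      using gap unfolding spec_def by blast
    then show "\<delta> \<le> cmod (z - of_real \<mu>)"
      by (simp add: z abs_minus_commute flip: of_real_diff)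
  qed
qed

lemma geometric_resolvent_identity:
  assumes "\<Phi> \<subseteq> \<Lambda>" "x \<in> \<Phi>" "Hrestr N d lam calV calU \<Lambda> \<psi> x = of_real \<mu> * \<psi> x"
  shows "Hrestr N d lam calV calU \<Phi> (\<lambda>y. if y \<in> \<Phi> then \<psi> y else 0) x - of_real \<mu> * \<psi> x
     = (\<Sum>y\<in>neighbours N d x. if y \<in> \<Lambda> - \<Phi> then \<psi> y else 0)"
proof -
  have "x \<in> \<Lambda>" using assms(1,2) by blast
  have "Hrestr N d lam calV calU \<Phi> (\<lambda>y. if y \<in> \<Phi> then \<psi> y else 0) x - of_real \<mu> * \<psi> x
      = Hrestr N d lam calV calU \<Phi> (\<lambda>y. if y \<in> \<Phi> then \<psi> y else 0) x - Hrestr N d lam calV calU \<Lambda> \<psi> x"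
    using assms(3) by simp
  also have "\<dots> = (\<Sum>y\<in>neighbours N d x. if y \<in> \<Lambda> then \<psi> y else 0)
      - (\<Sum>y\<in>neighbours N d x. if y \<in> \<Phi> then \<psi> y else 0)"
    using assms(2) \<open>x \<in> \<Lambda>\<close> by (simp add: Hrestr_inside cong: if_cong)
  also have "\<dots> = (\<Sum>y\<in>neighbours N d x. if y \<in> \<Lambda> - \<Phi> then \<psi> y else 0)"
    unfolding sum_subtractf[symmetric] using assms(1) by (intro sum.cong) auto
  finally show ?thesis .
qed

lemma norm_geometric_resolvent_le:
  assumes "\<Phi> \<subseteq> \<Lambda>" "x \<in> \<Phi>" "Hrestr N d lam calV calU \<Lambda> \<psi> x = of_real \<mu> * \<psi> x" "0 \<le> K"
    and bound: "\<And>y. y \<in> neighbours N d x \<Longrightarrow> y \<in> \<Lambda> - \<Phi> \<Longrightarrow> cmod (\<psi> y) \<le> K"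
  shows "cmod (Hrestr N d lam calV calU \<Phi> (\<lambda>y. if y \<in> \<Phi> then \<psi> y else 0) x - of_real \<mu> * \<psi> x)
    \<le> 3 ^ (N * d) * K"
proof -
  have "cmod (\<Sum>y\<in>neighbours N d x. if y \<in> \<Lambda> - \<Phi> then \<psi> y else 0) \<le> (\<Sum>y\<in>neighbours N d x. K)"
    using bound \<open>0 \<le> K\<close> by (intro order_trans[OF norm_sum] sum_mono) auto
  also have "\<dots> \<le> 3 ^ (N * d) * K"
    using card_neighbours_le[of N d x] \<open>0 \<le> K\<close> by (simp add: mult_right_mono flip: of_nat_power)
  finally show ?thesis
    using geometric_resolvent_identity[OF assms(1-3)] by simp
qed

section \<open>Decay through a localizing cube\<close>

lemma eigenbasis_pointwise_bound:
  assumes fin: "finite \<Theta>" and sub: "\<Theta> \<subseteq> conf N d" and finB: "finite B"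
    and eigen: "\<forall>\<phi>\<in>B. \<forall>x\<in>\<Theta>. Hrestr N d lam calV calU \<Theta> \<phi> x = of_real (ev \<phi>) * \<phi> x"
    and orth: "\<forall>\<phi>\<in>B. \<forall>\<psi>\<in>B. inner_l2 \<Theta> \<phi> \<psi> = (if \<phi> = \<psi> then 1 else 0)"
    and spans: "\<forall>f. supp_in \<Theta> f \<longrightarrow> (\<exists>c. \<forall>x\<in>\<Theta>. f x = (\<Sum>\<phi>\<in>B. c \<phi> * \<phi> x))"
    and "0 < \<delta>" and gap: "\<forall>\<phi>\<in>B. \<delta> \<le> \<bar>\<mu> - ev \<phi>\<bar>"
    and F: "supp_in \<Theta> F" and v: "v \<in> \<Theta>"
  defines "G \<equiv> \<lambda>w. Hrestr N d lam calV calU \<Theta> F w - of_real \<mu> * F w"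
  shows "cmod (F v) \<le> (1 / \<delta>) * (\<Sum>\<phi>\<in>B. \<Sum>w\<in>\<Theta>. cmod (G w) * cmod (\<phi> w) * cmod (\<phi> v))"
proof -
  interpret H: hermitian_operator \<Theta> "Hrestr N d lam calV calU \<Theta>"
    by (rule hermitian_operator_Hrestr[OF fin sub])
  obtain c where c: "\<forall>x\<in>\<Theta>. F x = (\<Sum>\<phi>\<in>B. c \<phi> * \<phi> x)" using spans F by blast
  have coeff_bound: "cmod (c \<phi>) \<le> (1 / \<delta>) * (\<Sum>w\<in>\<Theta>. cmod (G w) * cmod (\<phi> w))" if "\<phi> \<in> B" for \<phi>
  proof -
    have cF: "inner_l2 \<Theta> F \<phi> = c \<phi>"
      by (rule orthonormal_coeff[OF orth finB c that])
    have "inner_l2 \<Theta> (Hrestr N d lam calV calU \<Theta> F) \<phi> = inner_l2 \<Theta> F (\<lambda>x. of_real (ev \<phi>) * \<phi> x)"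
      unfolding H.T_hermitian using eigen that by (intro inner_l2_cong) auto
    then have "inner_l2 \<Theta> G \<phi> = of_real (ev \<phi>) * c \<phi> - of_real \<mu> * c \<phi>"
      unfolding G_def by (simp add: inner_l2_diff_left inner_l2_scale_left inner_l2_scale_right cF)
    then have "\<bar>ev \<phi> - \<mu>\<bar> * cmod (c \<phi>) = cmod (inner_l2 \<Theta> G \<phi>)"
      by (simp add: norm_mult flip: left_diff_distrib of_real_diff)
    also have "\<dots> \<le> (\<Sum>w\<in>\<Theta>. cmod (G w) * cmod (\<phi> w))"
      by (rule norm_inner_l2_le)
    finally have "\<delta> * cmod (c \<phi>) \<le> (\<Sum>w\<in>\<Theta>. cmod (G w) * cmod (\<phi> w))"
      using gap that mult_right_mono[of \<delta> "\<bar>ev \<phi> - \<mu>\<bar>" "cmod (c \<phi>)"]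
      by (simp add: abs_minus_commute)
    then show ?thesis using \<open>0 < \<delta>\<close> by (simp add: field_simps)
  qed
  have "cmod (F v) \<le> (\<Sum>\<phi>\<in>B. cmod (c \<phi>) * cmod (\<phi> v))"
    using c v by (simp add: norm_mult order_trans[OF norm_sum])
  also have "\<dots> \<le> (\<Sum>\<phi>\<in>B. ((1 / \<delta>) * (\<Sum>w\<in>\<Theta>. cmod (G w) * cmod (\<phi> w))) * cmod (\<phi> v))"
    by (intro sum_mono mult_right_mono coeff_bound) auto
  also have "\<dots> = (1 / \<delta>) * (\<Sum>\<phi>\<in>B. \<Sum>w\<in>\<Theta>. cmod (G w) * cmod (\<phi> w) * cmod (\<phi> v))"
    by (simp add: sum_distrib_left sum_distrib_right mult_ac)
  finally show ?thesis .
qed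

context config_space
begin

lemma bdry_of_neighbour:
  assumes "\<Phi> = cube N d R b \<inter> \<Lambda>" "w \<in> \<Phi>" "y \<in> neighbours N d w" "y \<in> \<Lambda> - \<Phi>"
  shows "(w, y) \<in> bdry N d \<Lambda> \<Phi>"
  using assms dS_neighbour_outside_cube[of w R b y] unfolding bdry_def by auto

text \<open>Below the localization radius \<open>ell powr \<tau>\<close> only the normalization \<open>|\<phi> y| \<le> 1\<close> is available;
  shifting the exponent by \<open>ell powr \<tau>\<close> covers both regimes.\<close>

lemma loc_at_bound:
  assumes loc: "loc_at N d \<tau> m ell \<Theta> x \<phi>" and "finite \<Theta>" "y \<in> \<Theta>" "0 \<le> m"
  shows "cmod (\<phi> y) \<le> exp (- m * (dS N d y x - ell powr \<tau>))"
proof (cases "ell powr \<tau> \<le> dS N d y x")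
  case True
  then have "cmod (\<phi> y) \<le> exp (- m * dS N d y x)"
    using loc \<open>y \<in> \<Theta>\<close> unfolding loc_at_def by blast
  also have "\<dots> \<le> exp (- m * (dS N d y x - ell powr \<tau>))"
    using \<open>0 \<le> m\<close> by (simp add: algebra_simps)
  finally show ?thesis .
next
  case False
  have "(cmod (\<phi> y))\<^sup>2 \<le> (\<Sum>y\<in>\<Theta>. (cmod (\<phi> y))\<^sup>2)"
    using assms(2,3) by (intro member_le_sum) auto
  also have "\<dots> = 1" using loc unfolding loc_at_def by blast
  finally have "cmod (\<phi> y) \<le> 1" by (simp add: power_le_one_iff abs_le_iff)
  also have "1 \<le> exp (- m * (dS N d y x - ell powr \<tau>))"
    using False \<open>0 \<le> m\<close> by (simp add: mult_nonneg_nonpos)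
  finally show ?thesis .
qed

lemma loc_at_product_decay:
  assumes loc: "loc_at N d \<tau> m ell \<Theta> x \<phi>" and "finite \<Theta>" "v \<in> \<Theta>" "w \<in> \<Theta>" "0 \<le> m"
    and far: "ell - 2 \<le> dS N d v w"
  shows "cmod (\<phi> w) * cmod (\<phi> v) \<le> exp (- m * (ell - 2 - 2 * ell powr \<tau>))"
proof -
  have "cmod (\<phi> w) * cmod (\<phi> v)
      \<le> exp (- m * (dS N d w x - ell powr \<tau>)) * exp (- m * (dS N d v x - ell powr \<tau>))"
    using assms by (intro mult_mono loc_at_bound) auto
  also have "\<dots> = exp (- m * (dS N d v x + dS N d w x - 2 * ell powr \<tau>))"
    by (simp add: mult_exp_exp algebra_simps)
  also have "\<dots> \<le> exp (- m * (ell - 2 - 2 * ell powr \<tau>))"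
    using far dS_triangle[of v w x] dS_commute[of x w] \<open>0 \<le> m\<close>
    by (simp add: mult_left_mono)
  finally show ?thesis .
qed

text \<open>A point \<open>w\<close> of a good cube contributes only if it has a neighbour outside the cube, and then
  it is at distance \<open>\<ge> ell - 2\<close> from the deep point \<open>v\<close>.\<close>

lemma good_cube_term_bound:
  fixes \<psi> :: "pt \<Rightarrow> complex" and ell :: real and a :: pt
  defines "\<Theta> \<equiv> cube N d ell a"
  assumes "0 \<le> m" "0 \<le> M" and sub: "\<Theta> \<subseteq> \<Lambda>"
    and eig: "Hrestr N d lam calV calU \<Lambda> \<psi> w = of_real \<mu> * \<psi> w"
    and M: "\<forall>y\<in>ex_bdry N d \<Lambda> \<Theta>. cmod (\<psi> y) \<le> M" and loc: "loc_at N d \<tau> m ell \<Theta> x \<phi>"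
    and v: "v \<in> \<Theta>" and w: "w \<in> \<Theta>" and far: "\<forall>y\<in>\<Lambda> - \<Theta>. ell - 1 \<le> dS N d v y"
  shows "cmod (Hrestr N d lam calV calU \<Theta> (\<lambda>y. if y \<in> \<Theta> then \<psi> y else 0) w - of_real \<mu> * \<psi> w)
      * cmod (\<phi> w) * cmod (\<phi> v) \<le> 3 ^ (N * d) * M * exp (- m * (ell - 2 - 2 * ell powr \<tau>))"
    (is "cmod ?G * _ * _ \<le> _")
proof (cases "?G = 0")
  case False
  then obtain y where y: "y \<in> neighbours N d w" "(if y \<in> \<Lambda> - \<Theta> then \<psi> y else 0) \<noteq> 0"
    unfolding geometric_resolvent_identity[OF sub w eig] by (rule sum.not_neutral_contains_not_neutral)
  then have y_out: "y \<in> \<Lambda> - \<Theta>" by meson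
  have Theta_eq: "\<Theta> = cube N d ell a \<inter> \<Lambda>" using sub \<Theta>_def by blast
  have "cmod (\<psi> y') \<le> M" if "y' \<in> neighbours N d w" "y' \<in> \<Lambda> - \<Theta>" for y'
    using M bdry_of_neighbour[OF Theta_eq w that] that(2) unfolding ex_bdry_def by blast
  then have "cmod ?G \<le> 3 ^ (N * d) * M"
    using norm_geometric_resolvent_le[OF sub w eig \<open>0 \<le> M\<close>] by blast
  moreover have "ell - 1 \<le> dS N d v y" using far y_out by blast
  then have "ell - 2 \<le> dS N d v w"
    using dS_triangle[of v y w] dS_neighbour_le_1[OF y(1)] by linarith
  then have "cmod (\<phi> w) * cmod (\<phi> v) \<le> exp (- m * (ell - 2 - 2 * ell powr \<tau>))"
    using loc_at_product_decay[OF loc _ v w \<open>0 \<le> m\<close>] finite_cube \<Theta>_def by blast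
  ultimately have "cmod ?G * (cmod (\<phi> w) * cmod (\<phi> v))
      \<le> (3 ^ (N * d) * M) * exp (- m * (ell - 2 - 2 * ell powr \<tau>))"
    using \<open>0 \<le> M\<close> by (intro mult_mono) auto
  then show ?thesis by (simp only: mult.assoc)
qed (simp add: \<open>0 \<le> M\<close>)

lemma good_cube_bound:
  fixes \<psi> :: "pt \<Rightarrow> complex" and ell :: real and a :: pt
  defines "\<Theta> \<equiv> cube N d ell a"
  assumes "0 \<le> m" and loc: "m_loc_cube N d lam calV calU \<tau> m ell a"
    and sub: "\<Theta> \<subseteq> \<Lambda>" and eig: "\<forall>x\<in>\<Lambda>. Hrestr N d lam calV calU \<Lambda> \<psi> x = of_real \<mu> * \<psi> x"
    and "0 < \<delta>" and gap: "\<forall>e \<in> spec N d lam calV calU \<Theta>. \<delta> \<le> \<bar>\<mu> - e\<bar>"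
    and M: "\<forall>y\<in>ex_bdry N d \<Lambda> \<Theta>. cmod (\<psi> y) \<le> M" and "0 \<le> M"
    and v: "v \<in> \<Theta>" and far: "\<forall>y\<in>\<Lambda> - \<Theta>. ell - 1 \<le> dS N d v y"
  shows "cmod (\<psi> v)
    \<le> (1 / \<delta>) * (real (card \<Theta>))\<^sup>2 * 3 ^ (N * d) * exp (- m * (ell - 2 - 2 * ell powr \<tau>)) * M"
proof -
  define E where "E = exp (- m * (ell - 2 - 2 * ell powr \<tau>))"
  define F where "F = (\<lambda>x. if x \<in> \<Theta> then \<psi> x else 0)"
  define G where "G = (\<lambda>w. Hrestr N d lam calV calU \<Theta> F w - of_real \<mu> * F w)"
  have fin: "finite \<Theta>" and sub_conf: "\<Theta> \<subseteq> conf N d"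
    unfolding \<Theta>_def using finite_cube by (auto simp: cube_def)
  obtain B where finB: "finite B"
    and B: "\<forall>\<phi>\<in>B. supp_in \<Theta> \<phi> \<and> (\<exists>e. is_eigenpair N d lam calV calU \<Theta> \<phi> e) \<and> m_loc_fun N d \<tau> m ell \<Theta> \<phi>"
    and orth: "\<forall>\<phi>\<in>B. \<forall>\<psi>\<in>B. inner_l2 \<Theta> \<phi> \<psi> = (if \<phi> = \<psi> then 1 else 0)"
    and spans: "\<forall>f. supp_in \<Theta> f \<longrightarrow> (\<exists>c. \<forall>x\<in>\<Theta>. f x = (\<Sum>\<phi>\<in>B. c \<phi> * \<phi> x))"
    using loc unfolding m_loc_cube_def Let_def \<Theta>_def by blast
  have "\<forall>\<phi>\<in>B. \<exists>e. is_eigenpair N d lam calV calU \<Theta> \<phi> e" using B by blast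
  then obtain ev where ev: "\<forall>\<phi>\<in>B. is_eigenpair N d lam calV calU \<Theta> \<phi> (ev \<phi>)"
    by (auto dest: bchoice)
  have expansion: "cmod (F v) \<le> (1 / \<delta>) * (\<Sum>\<phi>\<in>B. \<Sum>w\<in>\<Theta>. cmod (G w) * cmod (\<phi> w) * cmod (\<phi> v))"
    unfolding G_def
  proof (rule eigenbasis_pointwise_bound[OF fin sub_conf finB _ orth spans \<open>0 < \<delta>\<close>])
    show "\<forall>\<phi>\<in>B. \<forall>x\<in>\<Theta>. Hrestr N d lam calV calU \<Theta> \<phi> x = of_real (ev \<phi>) * \<phi> x"
      using ev unfolding is_eigenpair_def by blast
    show "\<forall>\<phi>\<in>B. \<delta> \<le> \<bar>\<mu> - ev \<phi>\<bar>"
      using ev gap unfolding spec_def by blast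
  qed (use v in \<open>auto simp: F_def supp_in_def\<close>)
  have "cmod (G w) * cmod (\<phi> w) * cmod (\<phi> v) \<le> 3 ^ (N * d) * M * E" if "\<phi> \<in> B" "w \<in> \<Theta>" for \<phi> w
  proof -
    obtain x where "loc_at N d \<tau> m ell \<Theta> x \<phi>"
      using B \<open>\<phi> \<in> B\<close> unfolding m_loc_fun_def by blast
    then show ?thesis
      using good_cube_term_bound[OF \<open>0 \<le> m\<close> \<open>0 \<le> M\<close> sub[unfolded \<Theta>_def] _ M[unfolded \<Theta>_def]]
        eig sub v far that unfolding \<Theta>_def G_def F_def E_def by auto
  qed
  then have "(\<Sum>\<phi>\<in>B. \<Sum>w\<in>\<Theta>. cmod (G w) * cmod (\<phi> w) * cmod (\<phi> v)) \<le> (\<Sum>\<phi>\<in>B. \<Sum>w\<in>\<Theta>. 3 ^ (N * d) * M * E)"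
    by (intro sum_mono) auto
  also have "\<dots> = (real (card \<Theta>))\<^sup>2 * 3 ^ (N * d) * M * E"
    using orthonormal_basis_card[OF fin finB orth spans] by (simp add: power2_eq_square)
  finally have "(1 / \<delta>) * (\<Sum>\<phi>\<in>B. \<Sum>w\<in>\<Theta>. cmod (G w) * cmod (\<phi> w) * cmod (\<phi> v))
      \<le> (1 / \<delta>) * ((real (card \<Theta>))\<^sup>2 * 3 ^ (N * d) * M * E)"
    using \<open>0 < \<delta>\<close> by (intro mult_left_mono) auto
  then show ?thesis
    using expansion v by (simp add: F_def E_def mult_ac)
qed

end

section \<open>Geometry of cubes\<close>

lemma unit_sum_delta:
  fixes N d j k :: nat
  assumes "j < N" "k < d"
  shows "(\<Sum>j'<N. \<Sum>k'<d. if j' = j \<and> k' = k then (1::int) else 0) = 1"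
proof -
  have "(\<Sum>k'<d. if j' = j \<and> k' = k then (1::int) else 0) = (if j' = j then 1 else 0)" for j'
    using assms(2) by (cases "j' = j") (simp_all add: sum.delta)
  then show ?thesis using assms(1) by (simp add: sum.delta)
qed

context config_space
begin

lemma step_towards:
  assumes p: "p \<in> conf N d" and jk: "j < N" "k < d" and ne: "p j k \<noteq> q j k"
  defines "p' \<equiv> p(j := (p j)(k := p j k + sgn (q j k - p j k)))"
  shows "p' \<in> conf N d" "p' \<in> neighbours N d p" "l1dist N d p' q = l1dist N d p q - 1"
    and "supdist N d p' c \<le> max (supdist N d p c) (supdist N d q c)"
proof -
  show p': "p' \<in> conf N d" using p jk unfolding conf_def p'_def by auto
  have "\<bar>p' j' k' - p j' k'\<bar> = (if j' = j \<and> k' = k then 1 else 0)" for j' k'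
    using ne unfolding p'_def by (auto simp: sgn_if)
  then show "p' \<in> neighbours N d p"
    using p' unit_sum_delta[OF jk] by (simp add: neighbours_def l1dist_def)
  have "\<bar>p' j' k' - q j' k'\<bar> = \<bar>p j' k' - q j' k'\<bar> - (if j' = j \<and> k' = k then 1 else 0)" for j' k'
    using ne unfolding p'_def by (auto simp: sgn_if)
  then show "l1dist N d p' q = l1dist N d p q - 1"
    using unit_sum_delta[OF jk] by (simp add: l1dist_def sum_subtractf)
  show "supdist N d p' c \<le> max (supdist N d p c) (supdist N d q c)"
  proof (rule supdist_leI)
    fix j' k' assume "j' < N" "k' < d"
    then have "\<bar>p j' k' - c j' k'\<bar> \<le> supdist N d p c" "\<bar>q j' k' - c j' k'\<bar> \<le> supdist N d q c"
      by (auto intro: coord_dist_le_supdist)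
    then show "\<bar>p' j' k' - c j' k'\<bar> \<le> max (supdist N d p c) (supdist N d q c)"
      using ne unfolding p'_def by (auto simp: sgn_if)
  qed
qed

text \<open>Changing one coordinate at a time from \<open>p\<close> towards \<open>q\<close> never leaves a sup-norm ball containing
  both, so this lattice path crosses the boundary of \<open>\<Phi>\<close> inside the ball.\<close>

lemma exists_exit_edge_in_ball:
  "nat (l1dist N d p q) = n \<Longrightarrow> p \<in> conf N d \<Longrightarrow> q \<in> conf N d \<Longrightarrow>
    supdist N d p c \<le> r \<Longrightarrow> supdist N d q c \<le> r \<Longrightarrow> p \<in> \<Phi> \<Longrightarrow> q \<notin> \<Phi> \<Longrightarrow>
    \<exists>u\<in>\<Phi>. \<exists>v\<in>neighbours N d u. supdist N d v c \<le> r \<and> v \<notin> \<Phi>"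
proof (induction n arbitrary: p)
  case 0
  then have "p \<noteq> q" by blast
  then obtain j k where jk: "j < N" "k < d" "p j k \<noteq> q j k"
    using conf_eqI[of p N d q] 0 by blast
  then show ?case using coord_dist_le_l1dist[OF jk(1,2), of p q] 0 by simp
next
  case (Suc n)
  then have "p \<noteq> q" by blast
  then obtain j k where jk: "j < N" "k < d" "p j k \<noteq> q j k"
    using conf_eqI[of p N d q] Suc by blast
  define p' where "p' = p(j := (p j)(k := p j k + sgn (q j k - p j k)))"
  note step = step_towards[where q = q, OF Suc.prems(2) jk, folded p'_def]
  have p'_ball: "supdist N d p' c \<le> r"
    using step(4)[of c] Suc.prems(4,5) by linarith
  show ?case
  proof (cases "p' \<in> \<Phi>")
    case False
    then show ?thesis using Suc.prems(6) step(2) p'_ball by blast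
  next
    case True
    have "nat (l1dist N d p' q) = n" using step(3) Suc.prems(1) by simp
    then show ?thesis using Suc.IH[of p'] step(1) Suc.prems(3,5,7) p'_ball True by blast
  qed
qed

text \<open>The cube \<open>cube N d L x0\<close> is not a sup-norm ball, but each of its points can be permuted into
  the ball of radius \<open>L\<close> around \<open>x0\<close>, and a symmetric \<open>\<Phi>\<close> is invariant under these permutations.\<close>

lemma exists_exit_edge:
  assumes sub: "\<Phi> \<subseteq> cube N d L x0" and sym: "symmetric_set N \<Phi>"
    and p: "p \<in> \<Phi>" and q: "q \<in> cube N d L x0 - \<Phi>"
  shows "\<exists>u\<in>\<Phi>. \<exists>v\<in>neighbours N d u. v \<in> cube N d L x0 - \<Phi>"
proof -
  have into_ball: "\<exists>\<pi>. \<pi> permutes {..<N} \<and> perm_pt (inv \<pi>) x \<in> conf N d \<and>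
      supdist N d (perm_pt (inv \<pi>) x) x0 \<le> L" if "x \<in> cube N d L x0" for x
  proof -
    obtain \<pi> where \<pi>: "\<pi> permutes {..<N}" "dS N d x x0 = supdist N d x (perm_pt \<pi> x0)"
      using dS_attained by blast
    have "supdist N d (perm_pt (inv \<pi>) x) x0 = supdist N d x (perm_pt \<pi> x0)"
      using supdist_perm_pt[OF permutes_inv[OF \<pi>(1)], of x "perm_pt \<pi> x0"]
      by (simp add: perm_pt_inv_left[OF \<pi>(1)])
    then show ?thesis
      using \<pi> that perm_pt_in_conf[OF permutes_inv[OF \<pi>(1)]] by (auto simp: cube_def)
  qed
  obtain \<pi> where \<pi>: "\<pi> permutes {..<N}" "perm_pt (inv \<pi>) p \<in> conf N d"
    "supdist N d (perm_pt (inv \<pi>) p) x0 \<le> L"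
    using into_ball p sub by blast
  obtain \<sigma> where \<sigma>: "\<sigma> permutes {..<N}" "perm_pt (inv \<sigma>) q \<in> conf N d"
    "supdist N d (perm_pt (inv \<sigma>) q) x0 \<le> L"
    using into_ball q by blast
  have "perm_pt (inv \<pi>) p \<in> \<Phi>"
    using sym p permutes_inv[OF \<pi>(1)] unfolding symmetric_set_def by blast
  moreover have "perm_pt (inv \<sigma>) q \<notin> \<Phi>"
  proof
    assume "perm_pt (inv \<sigma>) q \<in> \<Phi>"
    then have "perm_pt \<sigma> (perm_pt (inv \<sigma>) q) \<in> \<Phi>"
      using sym \<sigma>(1) unfolding symmetric_set_def by blast
    then show False using q perm_pt_inv_right[OF \<sigma>(1)] by simp
  qed
  ultimately obtain u v where "u \<in> \<Phi>" "v \<in> neighbours N d u" "supdist N d v x0 \<le> L" "v \<notin> \<Phi>"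
    using exists_exit_edge_in_ball[OF refl \<pi>(2) \<sigma>(2), of x0 "\<lfloor>L\<rfloor>"] \<pi>(3) \<sigma>(3)
    by (metis le_floor_iff)
  moreover have "dS N d v x0 \<le> L"
    using dS_le_supdist[of v x0] \<open>supdist N d v x0 \<le> L\<close> by linarith
  ultimately show ?thesis
    by (auto simp: cube_def neighbours_def)
qed

text \<open>The sum of the first coordinates of all particles is permutation invariant and \<open>N\<close>-Lipschitz
  for \<open>dS\<close>; shifting every particle of \<open>x0\<close> by \<open>\<lfloor>L\<rfloor>\<close> in the right direction therefore gives a
  point of \<open>cube N d L x0\<close> at distance at least \<open>\<lfloor>L\<rfloor>\<close> from any given point.\<close>

definition coord_sum :: "pt \<Rightarrow> int" where
  "coord_sum x = (\<Sum>j<N. x j 0)"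

lemma coord_sum_perm_pt: "\<pi> permutes {..<N} \<Longrightarrow> coord_sum (perm_pt \<pi> x) = coord_sum x"
  unfolding coord_sum_def perm_pt_def using sum.permute[of \<pi> "{..<N}" "\<lambda>j. x j 0"] by simp

lemma coord_sum_diff_le: "real_of_int \<bar>coord_sum x - coord_sum y\<bar> \<le> real N * dS N d x y"
proof -
  obtain \<pi> where \<pi>: "\<pi> permutes {..<N}" "dS N d x y = supdist N d x (perm_pt \<pi> y)"
    using dS_attained by blast
  have "\<bar>coord_sum x - coord_sum y\<bar> = \<bar>\<Sum>j<N. x j 0 - perm_pt \<pi> y j 0\<bar>"
    using coord_sum_perm_pt[OF \<pi>(1), of y] by (simp add: coord_sum_def sum_subtractf)
  also have "\<dots> \<le> (\<Sum>j<N. \<bar>x j 0 - perm_pt \<pi> y j 0\<bar>)" by (rule sum_abs)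
  also have "\<dots> \<le> (\<Sum>j<N. supdist N d x (perm_pt \<pi> y))"
    using d_pos by (intro sum_mono coord_dist_le_supdist) auto
  finally have "\<bar>coord_sum x - coord_sum y\<bar> \<le> int N * supdist N d x (perm_pt \<pi> y)" by simp
  then have "real_of_int \<bar>coord_sum x - coord_sum y\<bar> \<le> real_of_int (int N * supdist N d x (perm_pt \<pi> y))"
    by (simp only: of_int_le_iff)
  then show ?thesis using \<pi>(2) by simp
qed

lemma exists_far_point:
  assumes "x0 \<in> conf N d" "0 \<le> L"
  shows "\<exists>z\<in>cube N d L x0. real_of_int \<lfloor>L\<rfloor> \<le> dS N d z a"
proof -
  define t where "t = (if coord_sum a \<le> coord_sum x0 then \<lfloor>L\<rfloor> else - \<lfloor>L\<rfloor>)"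
  define z where "z = (\<lambda>j k. x0 j k + (if j < N \<and> k = 0 then t else 0))"
  have "z \<in> conf N d" using assms(1) d_pos unfolding conf_def z_def by auto
  moreover have "supdist N d z x0 \<le> \<lfloor>L\<rfloor>"
    using assms(2) by (intro supdist_leI) (auto simp: z_def t_def)
  then have "dS N d z x0 \<le> L" using dS_le_supdist[of z x0] by linarith
  moreover have "coord_sum z = coord_sum x0 + int N * t"
    by (simp add: coord_sum_def z_def sum.distrib)
  then have "int N * \<lfloor>L\<rfloor> \<le> \<bar>coord_sum z - coord_sum a\<bar>"
    using assms(2) by (auto simp: t_def)
  then have "real_of_int (int N * \<lfloor>L\<rfloor>) \<le> real_of_int \<bar>coord_sum z - coord_sum a\<bar>"
    by (simp only: of_int_le_iff)
  then have "real N * \<lfloor>L\<rfloor> \<le> real N * dS N d z a"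
    using coord_sum_diff_le[of z a] by simp
  then have "\<lfloor>L\<rfloor> \<le> dS N d z a" using N_pos by simp
  ultimately show ?thesis unfolding cube_def by blast
qed

end

section \<open>The combinatorial prefactor\<close>

lemma power_le_exp_of_ln_le:
  fixes x b :: real
  assumes "0 < x" "real n * ln x \<le> b"
  shows "x ^ n \<le> exp b"
proof -
  have "x ^ n = exp (real n * ln x)" using assms(1) by (simp add: exp_of_nat_mult)
  then show ?thesis using assms(2) by simp
qed

lemma fact_le_exp_powr:
  assumes "1 \<le> N" "real N \<le> ell powr \<tau>" "\<tau> < 1" "1 \<le> ell"
  shows "fact N \<le> exp (ell powr \<tau> * ln ell)"
proof -
  have "(fact N :: real) \<le> real N ^ N" using fact_le_power[of N] by (simp flip: of_nat_power)
  also have "\<dots> \<le> exp (ell powr \<tau> * ln ell)"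
  proof (rule power_le_exp_of_ln_le)
    have "ell powr \<tau> \<le> ell" using powr_mono[of \<tau> 1 ell] assms(3,4) by simp
    then have "ln (real N) \<le> ln ell" using assms(1,2) by simp
    then show "real N * ln (real N) \<le> ell powr \<tau> * ln ell"
      using assms(1,2) by (intro mult_mono) auto
  qed (use assms(1) in simp)
  finally show ?thesis .
qed

lemma power_le_exp_cube_count:
  fixes a ell \<tau> :: real and N d :: nat
  assumes "1 \<le> ell" "real N \<le> ell powr \<tau>" "0 < a" "a \<le> 3 * ell\<^sup>2"
  shows "a ^ (N * d) \<le> exp (real d * (ell powr \<tau> * ln (3 * ell\<^sup>2)))"
proof (rule power_le_exp_of_ln_le[OF \<open>0 < a\<close>])
  have "1 \<le> ell\<^sup>2" using assms(1) by (simp add: one_le_power)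
  have "ln a \<le> ln (3 * ell\<^sup>2)"
    using assms(3,4) by (subst ln_le_cancel_iff) auto
  then have "real (N * d) * ln a \<le> real (N * d) * ln (3 * ell\<^sup>2)"
    by (intro mult_left_mono) auto
  also have "\<dots> = real d * (real N * ln (3 * ell\<^sup>2))" by simp
  also have "\<dots> \<le> real d * (ell powr \<tau> * ln (3 * ell\<^sup>2))"
    using assms(2) \<open>1 \<le> ell\<^sup>2\<close> by (intro mult_left_mono mult_right_mono) auto
  finally show "real (N * d) * ln a \<le> real d * (ell powr \<tau> * ln (3 * ell\<^sup>2))" .
qed

lemma prefactor_le:
  fixes ell m \<tau> \<gamma> \<beta> :: real and N d :: nat
  assumes "1 \<le> ell" "1 \<le> N" "real N \<le> ell powr \<tau>" "\<tau> < 1" "\<gamma> \<le> 2"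
    and large: "ln 4 + 2 * ell powr (\<gamma> * \<beta>) + 3 * (ell powr \<tau> * ln ell)
      + 5 * real d * (ell powr \<tau> * ln (3 * ell\<^sup>2)) + 2 * m + 2 * m * ell powr \<tau> \<le> m * ell / 2"
  shows "(2 * exp ((ell powr \<gamma>) powr \<beta>))\<^sup>2 * (fact N * (2 * ell powr \<gamma> + 1) ^ (N * d))
     * (fact N * (2 * ell + 1) ^ (N * d))\<^sup>2 * 9 ^ (N * d) * exp (- m * (ell - 2 - 2 * ell powr \<tau>))
     \<le> exp (- m * ell / 2)"
proof -
  let ?t = "ell powr \<tau>"
  let ?D = "real d * (?t * ln (3 * ell\<^sup>2))"
  note count = power_le_exp_cube_count[OF assms(1,3), of _ d]
  have "0 < ell" using assms(1) by simp
  have "1 \<le> ell\<^sup>2" using assms(1) by (simp add: one_le_power)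
  have "ell \<le> ell\<^sup>2" using assms(1) by (simp add: power2_eq_square mult_le_cancel_left1)
  have "ell powr \<gamma> \<le> ell\<^sup>2"
    using powr_mono[of \<gamma> 2 ell] assms(1,5) by (simp add: powr_realpow[OF \<open>0 < ell\<close>])
  moreover have "0 < 2 * ell powr \<gamma> + 1" using powr_ge_zero[of ell \<gamma>] by linarith
  ultimately have big_cube: "(2 * ell powr \<gamma> + 1) ^ (N * d) \<le> exp ?D"
    using \<open>1 \<le> ell\<^sup>2\<close> by (intro count) auto
  have small_cube: "(2 * ell + 1) ^ (N * d) \<le> exp ?D"
    using \<open>0 < ell\<close> \<open>1 \<le> ell\<^sup>2\<close> \<open>ell \<le> ell\<^sup>2\<close> by (intro count) auto
  have "(9::real) ^ (N * d) = 3 ^ (N * d) * 3 ^ (N * d)" by (simp flip: power_mult_distrib)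
  also have "\<dots> \<le> exp ?D * exp ?D"
    using count[of 3] \<open>1 \<le> ell\<^sup>2\<close> by (intro mult_mono) auto
  finally have nine: "(9::real) ^ (N * d) \<le> exp ?D * exp ?D" .
  have gap: "(2 * exp ((ell powr \<gamma>) powr \<beta>))\<^sup>2 = exp (ln 4 + 2 * ell powr (\<gamma> * \<beta>))"
    by (simp add: powr_powr exp_add power2_eq_square mult_exp_exp)
  have "(2 * exp ((ell powr \<gamma>) powr \<beta>))\<^sup>2 * (fact N * (2 * ell powr \<gamma> + 1) ^ (N * d))
     * (fact N * (2 * ell + 1) ^ (N * d))\<^sup>2 * 9 ^ (N * d) * exp (- m * (ell - 2 - 2 * ?t))
     \<le> exp (ln 4 + 2 * ell powr (\<gamma> * \<beta>)) * (exp (?t * ln ell) * exp ?D)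
     * (exp (?t * ln ell) * exp ?D)\<^sup>2 * (exp ?D * exp ?D) * exp (- m * (ell - 2 - 2 * ?t))"
    unfolding gap using fact_le_exp_powr[OF assms(2,3,4,1)]
    by (intro mult_mono power_mono big_cube small_cube nine mult_nonneg_nonneg zero_le_power)
      (use \<open>0 < ell\<close> in \<open>auto simp: add_pos_nonneg\<close>)
  also have "\<dots> = exp (ln 4 + 2 * ell powr (\<gamma> * \<beta>) + 3 * (?t * ln ell) + 5 * ?D + 2 * m
      + 2 * m * ?t - m * ell)"
    by (simp add: power2_eq_square mult_exp_exp algebra_simps)
  also have "\<dots> \<le> exp (- m * ell / 2)"
    using large by (simp add: algebra_simps)
  finally show ?thesis .
qed

lemma eventually_large_scale:
  fixes m \<tau> \<gamma> \<beta> :: real and d :: nat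
  assumes "\<tau> < 1" "1 < \<gamma>" "\<gamma> * \<beta> < 1" "0 < m"
  shows "eventually (\<lambda>ell. 2 \<le> ell \<and> ell + 1 \<le> ell powr \<gamma> \<and>
     ln 4 + 2 * ell powr (\<gamma> * \<beta>) + 3 * (ell powr \<tau> * ln ell)
       + 5 * real d * (ell powr \<tau> * ln (3 * ell\<^sup>2)) + 2 * m + 2 * m * ell powr \<tau> \<le> m * ell / 2) at_top"
proof -
  have "eventually (\<lambda>ell::real. 2 \<le> ell) at_top" by real_asymp
  moreover have "eventually (\<lambda>ell::real. ell + 1 \<le> ell powr \<gamma>) at_top" using assms by real_asymp
  moreover have "eventually (\<lambda>ell::real. ln 4 + 2 * m \<le> m * ell / 10) at_top" using assms by real_asymp
  moreover have "eventually (\<lambda>ell::real. 2 * ell powr (\<gamma> * \<beta>) \<le> m * ell / 10) at_top"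
    using assms by real_asymp
  moreover have "eventually (\<lambda>ell::real. 3 * (ell powr \<tau> * ln ell) \<le> m * ell / 10) at_top"
    using assms by real_asymp
  moreover have "eventually (\<lambda>ell::real. 5 * real d * (ell powr \<tau> * ln (3 * ell\<^sup>2)) \<le> m * ell / 10) at_top"
    using assms by real_asymp
  moreover have "eventually (\<lambda>ell::real. 2 * m * ell powr \<tau> \<le> m * ell / 10) at_top"
    using assms by real_asymp
  ultimately show ?thesis
    by eventually_elim (use \<open>0 < m\<close> in linarith)
qed

lemma scale_condition_bounds:
  fixes C \<tau> ell :: real and N :: nat
  assumes "1 \<le> C" "1 \<le> N" "0 < \<tau>" and scale: "C * (real N * ln (2 + real N)) powr (1 / \<tau>) \<le> ell"
  shows "C \<le> ell" "real N \<le> ell powr \<tau>"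
proof -
  have "1 \<le> ln (2 + real N)"
    using assms(2) ln_ge_iff[of "2 + real N" 1] exp_le by simp
  then have "real N \<le> real N * ln (2 + real N)"
    by (simp add: mult_le_cancel_left1)
  then have N_le: "real N powr (1 / \<tau>) \<le> (real N * ln (2 + real N)) powr (1 / \<tau>)"
    using assms(3) by (intro powr_mono2) auto
  have "1 \<le> real N powr (1 / \<tau>)"
    using assms(2,3) by (simp add: ge_one_powr_ge_zero)
  then have "C * 1 \<le> C * (real N * ln (2 + real N)) powr (1 / \<tau>)"
    using N_le assms(1) by (intro mult_left_mono) auto
  moreover have "1 * real N powr (1 / \<tau>) \<le> C * (real N * ln (2 + real N)) powr (1 / \<tau>)"
    using N_le assms(1) by (intro mult_mono) auto
  ultimately have "C \<le> ell" and N_ell: "real N powr (1 / \<tau>) \<le> ell"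
    using scale by simp_all
  then show "C \<le> ell" by simp
  have "real N = (real N powr (1 / \<tau>)) powr \<tau>"
    using assms(3) by (simp add: powr_powr)
  also have "\<dots> \<le> ell powr \<tau>"
    using N_ell assms(3) by (intro powr_mono2) auto
  finally show "real N \<le> ell powr \<tau>" .
qed

section \<open>Decay inside a buffered cube\<close>

lemma gap_pointwise_bound:
  fixes \<psi> :: "pt \<Rightarrow> complex"
  assumes sub: "\<Upsilon> \<subseteq> \<Lambda>" and "\<Lambda> \<subseteq> conf N d" and "finite \<Lambda>"
    and "0 < \<delta>" and gap: "\<forall>e\<in>spec N d lam calV calU \<Upsilon>. \<delta> \<le> \<bar>\<mu> - e\<bar>"
    and eig: "\<forall>x\<in>\<Lambda>. Hrestr N d lam calV calU \<Lambda> \<psi> x = of_real \<mu> * \<psi> x"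
    and "0 \<le> K" and K: "\<forall>u\<in>\<Upsilon>. \<forall>y\<in>neighbours N d u. y \<in> \<Lambda> - \<Upsilon> \<longrightarrow> cmod (\<psi> y) \<le> K"
    and y0: "y0 \<in> \<Upsilon>"
  shows "cmod (\<psi> y0) \<le> (1 / \<delta>) * (real (card \<Upsilon>) * 3 ^ (N * d) * K)"
proof -
  define F where "F = (\<lambda>x. if x \<in> \<Upsilon> then \<psi> x else 0)"
  let ?R = "real (card \<Upsilon>) * 3 ^ (N * d) * K"
  have fin: "finite \<Upsilon>" using finite_subset[OF sub \<open>finite \<Lambda>\<close>] .
  have residual: "cmod (Hrestr N d lam calV calU \<Upsilon> F x - of_real \<mu> * F x) \<le> 3 ^ (N * d) * K"
    if x: "x \<in> \<Upsilon>" for x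
    using norm_geometric_resolvent_le[OF sub x _ \<open>0 \<le> K\<close>] eig sub K x by (auto simp: F_def)
  have "\<delta>\<^sup>2 * (cmod (F y0))\<^sup>2 \<le> \<delta>\<^sup>2 * sqnorm_l2 \<Upsilon> F"
    unfolding sqnorm_l2_def using fin y0 by (intro mult_left_mono member_le_sum) auto
  also have "\<dots> \<le> sqnorm_l2 \<Upsilon> (\<lambda>x. Hrestr N d lam calV calU \<Upsilon> F x - of_real \<mu> * F x)"
    using Hrestr_gap_sqnorm_bound[OF fin _ \<open>0 < \<delta>\<close> gap] sub assms(2)
    by (simp add: F_def supp_in_def)
  also have "\<dots> \<le> (\<Sum>x\<in>\<Upsilon>. (3 ^ (N * d) * K)\<^sup>2)"
    unfolding sqnorm_l2_def using residual by (intro sum_mono power_mono) auto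
  also have "\<dots> = real (card \<Upsilon>) * (3 ^ (N * d) * K)\<^sup>2" by simp
  also have "\<dots> \<le> (real (card \<Upsilon>))\<^sup>2 * (3 ^ (N * d) * K)\<^sup>2"
  proof (rule mult_right_mono)
    have "card \<Upsilon> \<noteq> 0" using y0 fin by auto
    then have "1 \<le> real (card \<Upsilon>)" by simp
    then show "real (card \<Upsilon>) \<le> (real (card \<Upsilon>))\<^sup>2" by (simp add: power2_eq_square)
  qed simp
  also have "\<dots> = ?R\<^sup>2" by (simp add: power_mult_distrib)
  finally have "(\<delta> * cmod (F y0))\<^sup>2 \<le> ?R\<^sup>2" by (simp add: power_mult_distrib)
  then have "\<delta> * cmod (F y0) \<le> ?R"
    by (rule power2_le_imp_le) (simp add: \<open>0 \<le> K\<close>)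
  then have "cmod (\<psi> y0) \<le> ?R / \<delta>"
    using y0 \<open>0 < \<delta>\<close> by (simp add: F_def pos_le_divide_eq mult.commute)
  then show ?thesis by simp
qed

context config_space
begin

lemma buffered_nonempty:
  assumes "buffered N d lam calV calU \<tau> m ell L x0 \<Upsilon> G" "0 \<le> ell"
  shows "\<Upsilon> \<noteq> {}"
proof -
  obtain b R where "b \<in> cube N d L x0" "ell \<le> R" "\<Upsilon> = cube N d R b \<inter> cube N d L x0"
    using assms(1) unfolding buffered_def by blast
  then have "b \<in> \<Upsilon>" using assms(2) dS_self[of b] by (auto simp: cube_def)
  then show ?thesis by blast
qed

lemma exterior_neighbour_bound:
  fixes \<psi> :: "pt \<Rightarrow> complex"
  assumes "0 \<le> m" "2 \<le> ell"
    and buf: "buffered N d lam calV calU \<tau> m ell L x0 \<Upsilon> G"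
    and eig: "\<forall>x\<in>cube N d L x0. Hrestr N d lam calV calU (cube N d L x0) \<psi> x = of_real \<mu> * \<psi> x"
    and "0 < \<delta>" and gap: "\<forall>a\<in>G. \<forall>e \<in> spec N d lam calV calU (cube N d ell a). \<delta> \<le> \<bar>\<mu> - e\<bar>"
    and M: "\<forall>a\<in>G. \<forall>y\<in>ex_bdry N d (cube N d L x0) (cube N d ell a). cmod (\<psi> y) \<le> M" "0 \<le> M"
    and u: "u \<in> \<Upsilon>" "y \<in> neighbours N d u" "y \<in> cube N d L x0 - \<Upsilon>"
  shows "cmod (\<psi> y) \<le> (1 / \<delta>) * (fact N * (2 * ell + 1) ^ (N * d))\<^sup>2 * 3 ^ (N * d)
    * exp (- m * (ell - 2 - 2 * ell powr \<tau>)) * M"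
proof -
  let ?\<Lambda> = "cube N d L x0"
  obtain b R where \<Upsilon>: "\<Upsilon> = cube N d R b \<inter> ?\<Lambda>"
    using buf unfolding buffered_def by blast
  have "u \<in> in_bdry N d ?\<Lambda> \<Upsilon>"
    using bdry_of_neighbour[OF \<Upsilon> u] u(1) unfolding in_bdry_def by blast
  then obtain a where a: "a \<in> G" and "u \<in> inner_part N d ?\<Lambda> (cube N d ell a) ell"
    using buf unfolding buffered_def by blast
  then have u_deep: "ell \<le> dS N d u y'" if "y' \<in> ?\<Lambda> - cube N d ell a" for y'
    using that unfolding inner_part_def by blast
  have "dS N d u y = 1"
    using bdry_of_neighbour[OF \<Upsilon> u] unfolding bdry_def by blast
  then have y: "y \<in> cube N d ell a"
    using u_deep[of y] u(3) \<open>2 \<le> ell\<close> by force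
  have y_deep: "\<forall>y'\<in>?\<Lambda> - cube N d ell a. ell - 1 \<le> dS N d y y'"
  proof
    fix y' assume "y' \<in> ?\<Lambda> - cube N d ell a"
    then show "ell - 1 \<le> dS N d y y'"
      using u_deep dS_triangle[of u y' y] \<open>dS N d u y = 1\<close> by fastforce
  qed
  have sub: "cube N d ell a \<subseteq> ?\<Lambda>"
    using a buf unfolding buffered_def Xi_def by blast
  have "cmod (\<psi> y) \<le> (1 / \<delta>) * (real (card (cube N d ell a)))\<^sup>2 * 3 ^ (N * d)
      * exp (- m * (ell - 2 - 2 * ell powr \<tau>)) * M"
    using a buf gap M unfolding buffered_def
    by (intro good_cube_bound[OF \<open>0 \<le> m\<close> _ sub eig \<open>0 < \<delta>\<close> _ _ \<open>0 \<le> M\<close> y y_deep]) auto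
  also have "\<dots> \<le> (1 / \<delta>) * (fact N * (2 * ell + 1) ^ (N * d))\<^sup>2 * 3 ^ (N * d)
      * exp (- m * (ell - 2 - 2 * ell powr \<tau>)) * M"
    using card_cube_le[of ell a] \<open>2 \<le> ell\<close> \<open>0 < \<delta>\<close> \<open>0 \<le> M\<close>
    by (intro mult_right_mono mult_left_mono power_mono) auto
  finally show ?thesis .
qed

lemma ex_bdry_good_cube_nonempty:
  assumes "x0 \<in> conf N d" "0 \<le> ell" "ell + 1 \<le> L"
    and buf: "buffered N d lam calV calU \<tau> m ell L x0 \<Upsilon> G" and proper: "\<Upsilon> \<subset> cube N d L x0"
  shows "\<exists>a\<in>G. ex_bdry N d (cube N d L x0) (cube N d ell a) \<noteq> {}"
proof -
  let ?\<Lambda> = "cube N d L x0"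
  obtain b R where \<Upsilon>: "\<Upsilon> = cube N d R b \<inter> ?\<Lambda>"
    using buf unfolding buffered_def by blast
  obtain p where "p \<in> \<Upsilon>" using buffered_nonempty[OF buf assms(2)] by blast
  moreover obtain q where "q \<in> ?\<Lambda> - \<Upsilon>" using proper by blast
  ultimately obtain u v where u: "u \<in> \<Upsilon>" "v \<in> neighbours N d u" "v \<in> ?\<Lambda> - \<Upsilon>"
    using exists_exit_edge[of \<Upsilon>] buf unfolding buffered_def by blast
  then have "u \<in> in_bdry N d ?\<Lambda> \<Upsilon>"
    using bdry_of_neighbour[OF \<Upsilon> u] unfolding in_bdry_def by blast
  then obtain a where a: "a \<in> G" and "u \<in> inner_part N d ?\<Lambda> (cube N d ell a) ell"
    using buf unfolding buffered_def by blast
  then have u_a: "u \<in> cube N d ell a" unfolding inner_part_def by blast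
  obtain z where "z \<in> ?\<Lambda>" "real_of_int \<lfloor>L\<rfloor> \<le> dS N d z a"
    using exists_far_point[OF assms(1), of L a] assms(2,3) by auto
  moreover have "ell < real_of_int \<lfloor>L\<rfloor>"
    using assms(3) real_of_int_floor_gt_diff_one[of L] by linarith
  ultimately have "z \<in> ?\<Lambda> - cube N d ell a" by (auto simp: cube_def)
  moreover note u_a
  moreover have sub: "cube N d ell a \<subseteq> ?\<Lambda>"
    using a buf unfolding buffered_def Xi_def by blast
  ultimately obtain u' v' where u': "u' \<in> cube N d ell a" "v' \<in> neighbours N d u'"
      "v' \<in> ?\<Lambda> - cube N d ell a"
    using exists_exit_edge[OF sub symmetric_set_cube] by blast
  have "cube N d ell a = cube N d ell a \<inter> ?\<Lambda>" using sub by blast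
  from bdry_of_neighbour[OF this] u' have "v' \<in> ex_bdry N d ?\<Lambda> (cube N d ell a)"
    unfolding ex_bdry_def by auto
  then show ?thesis using a by blast
qed

lemma buffered_cube_pointwise_bound:
  fixes \<psi> :: "pt \<Rightarrow> complex"
  assumes "0 \<le> m" "2 \<le> ell" "0 \<le> L"
    and buf: "buffered N d lam calV calU \<tau> m ell L x0 \<Upsilon> G"
    and eig: "\<forall>x\<in>cube N d L x0. Hrestr N d lam calV calU (cube N d L x0) \<psi> x = of_real \<mu> * \<psi> x"
    and "0 < \<delta>" and gap_\<Upsilon>: "\<forall>e \<in> spec N d lam calV calU \<Upsilon>. \<delta> \<le> \<bar>\<mu> - e\<bar>"
    and gap_G: "\<forall>a\<in>G. \<forall>e \<in> spec N d lam calV calU (cube N d ell a). \<delta> \<le> \<bar>\<mu> - e\<bar>"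
    and M: "\<forall>a\<in>G. \<forall>y\<in>ex_bdry N d (cube N d L x0) (cube N d ell a). cmod (\<psi> y) \<le> M" "0 \<le> M"
    and "y\<^sub>0 \<in> \<Upsilon>"
  shows "cmod (\<psi> y\<^sub>0) \<le> (1 / \<delta>)\<^sup>2 * (fact N * (2 * L + 1) ^ (N * d))
    * (fact N * (2 * ell + 1) ^ (N * d))\<^sup>2 * 9 ^ (N * d) * exp (- m * (ell - 2 - 2 * ell powr \<tau>)) * M"
proof -
  let ?\<Lambda> = "cube N d L x0"
  define K where "K = (1 / \<delta>) * (fact N * (2 * ell + 1) ^ (N * d))\<^sup>2 * 3 ^ (N * d)
    * exp (- m * (ell - 2 - 2 * ell powr \<tau>)) * M"
  have "0 \<le> K" unfolding K_def using \<open>0 < \<delta>\<close> \<open>0 \<le> M\<close> by simp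
  have sub: "\<Upsilon> \<subseteq> ?\<Lambda>" using buf unfolding buffered_def by blast
  have "cmod (\<psi> y\<^sub>0) \<le> (1 / \<delta>) * (real (card \<Upsilon>) * 3 ^ (N * d) * K)"
  proof (rule gap_pointwise_bound[OF sub _ finite_cube \<open>0 < \<delta>\<close> gap_\<Upsilon> eig \<open>0 \<le> K\<close> _ \<open>y\<^sub>0 \<in> \<Upsilon>\<close>])
    show "?\<Lambda> \<subseteq> conf N d" by (auto simp: cube_def)
    show "\<forall>u\<in>\<Upsilon>. \<forall>y\<in>neighbours N d u. y \<in> ?\<Lambda> - \<Upsilon> \<longrightarrow> cmod (\<psi> y) \<le> K"
      unfolding K_def using exterior_neighbour_bound[OF assms(1,2) buf eig \<open>0 < \<delta>\<close> gap_G M]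
      by blast
  qed
  also have "\<dots> \<le> (1 / \<delta>) * ((fact N * (2 * L + 1) ^ (N * d)) * 3 ^ (N * d) * K)"
  proof -
    have "real (card \<Upsilon>) \<le> real (card ?\<Lambda>)" using card_mono[OF finite_cube sub] by simp
    also have "\<dots> \<le> fact N * (2 * L + 1) ^ (N * d)" using card_cube_le \<open>0 \<le> L\<close> by blast
    finally show ?thesis
      using \<open>0 < \<delta>\<close> \<open>0 \<le> K\<close> by (intro mult_left_mono mult_right_mono) auto
  qed
  also have "\<dots> = (1 / \<delta>)\<^sup>2 * (fact N * (2 * L + 1) ^ (N * d))
    * (fact N * (2 * ell + 1) ^ (N * d))\<^sup>2 * 9 ^ (N * d) * exp (- m * (ell - 2 - 2 * ell powr \<tau>)) * M"
  proof -
    have "(9::real) ^ (N * d) = 3 ^ (N * d) * 3 ^ (N * d)"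
      by (simp flip: power_mult_distrib)
    then show ?thesis unfolding K_def power2_eq_square by (simp only: mult_ac)
  qed
  finally show ?thesis .
qed

lemma buffered_cube_max_bound:
  fixes \<psi> :: "pt \<Rightarrow> complex"
  assumes "x0 \<in> conf N d" "0 \<le> m" "2 \<le> ell" "ell + 1 \<le> L"
    and eigenpair: "is_eigenpair N d lam calV calU (cube N d L x0) \<psi> \<mu>"
    and proper: "\<Upsilon> \<subset> cube N d L x0" and buf: "buffered N d lam calV calU \<tau> m ell L x0 \<Upsilon> G"
    and "0 < \<delta>" and gap_\<Upsilon>: "\<forall>e \<in> spec N d lam calV calU \<Upsilon>. \<delta> \<le> \<bar>\<mu> - e\<bar>"
    and gap_G: "\<forall>a\<in>G. \<forall>e \<in> spec N d lam calV calU (cube N d ell a). \<delta> \<le> \<bar>\<mu> - e\<bar>"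
  shows "Max ((\<lambda>y. cmod (\<psi> y)) ` \<Upsilon>) \<le> (1 / \<delta>)\<^sup>2 * (fact N * (2 * L + 1) ^ (N * d))
      * (fact N * (2 * ell + 1) ^ (N * d))\<^sup>2 * 9 ^ (N * d) * exp (- m * (ell - 2 - 2 * ell powr \<tau>))
      * Max (\<Union>a\<in>G. (\<lambda>v. cmod (\<psi> v)) ` ex_bdry N d (cube N d L x0) (cube N d ell a))"
    (is "_ \<le> ?P * Max ?S")
    and "0 \<le> Max (\<Union>a\<in>G. (\<lambda>v. cmod (\<psi> v)) ` ex_bdry N d (cube N d L x0) (cube N d ell a))"
proof -
  have "finite ?S"
    by (rule finite_subset[OF _ finite_imageI[OF finite_cube[of L x0]]]) (auto simp: ex_bdry_def)
  moreover have "?S \<noteq> {}"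
    using ex_bdry_good_cube_nonempty[OF assms(1) _ assms(4) buf proper] assms(3) by auto
  ultimately have M: "\<forall>a\<in>G. \<forall>y\<in>ex_bdry N d (cube N d L x0) (cube N d ell a). cmod (\<psi> y) \<le> Max ?S"
    and "0 \<le> Max ?S"
    using Max_in[of ?S] by (auto intro: Max_ge)
  then show "0 \<le> Max ?S" by simp
  have "cmod (\<psi> y) \<le> ?P * Max ?S" if "y \<in> \<Upsilon>" for y
    using buffered_cube_pointwise_bound[OF assms(2,3) _ buf _ \<open>0 < \<delta>\<close> gap_\<Upsilon> gap_G M \<open>0 \<le> Max ?S\<close> that]
      eigenpair assms(3,4) by (simp add: is_eigenpair_def)
  then show "Max ((\<lambda>y. cmod (\<psi> y)) ` \<Upsilon>) \<le> ?P * Max ?S"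
    using buffered_nonempty[OF buf] finite_subset[OF _ finite_cube, of \<Upsilon> L x0] proper assms(3)
    by (subst Max_le_iff) auto
qed

lemma buffered_cube_decay:
  fixes \<psi> :: "pt \<Rightarrow> complex"
  assumes x0: "x0 \<in> conf N d" and "2 \<le> ell" and L: "L = ell powr \<gamma>" "ell + 1 \<le> L"
    and "\<tau> < 1" "\<gamma> < 2" "0 < m" and N_le: "real N \<le> ell powr \<tau>"
    and large: "ln 4 + 2 * ell powr (\<gamma> * \<beta>) + 3 * (ell powr \<tau> * ln ell)
      + 5 * real d * (ell powr \<tau> * ln (3 * ell\<^sup>2)) + 2 * m + 2 * m * ell powr \<tau> \<le> m * ell / 2"
    and eigenpair: "is_eigenpair N d lam calV calU (cube N d L x0) \<psi> \<mu>"
    and proper: "\<Upsilon> \<subset> cube N d L x0" and buf: "buffered N d lam calV calU \<tau> m ell L x0 \<Upsilon> G"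
    and gap_\<Upsilon>: "\<forall>e \<in> spec N d lam calV calU \<Upsilon>. 1/2 * exp (- (L powr \<beta>)) \<le> \<bar>\<mu> - e\<bar>"
    and gap_G: "\<forall>a \<in> G. \<forall>e \<in> spec N d lam calV calU (cube N d ell a). 1/2 * exp (- (L powr \<beta>)) \<le> \<bar>\<mu> - e\<bar>"
  shows "Max ((\<lambda>y. cmod (\<psi> y)) ` \<Upsilon>) \<le> exp (- ((m * (1 - 3 * ell powr (- (1 - \<tau>) / 2))) / 2) * ell)
    * Max (\<Union>a\<in>G. (\<lambda>v. cmod (\<psi> v)) ` ex_bdry N d (cube N d L x0) (cube N d ell a))"
    (is "?lhs \<le> _ * ?M")
proof -
  define \<delta> where "\<delta> = 1/2 * exp (- (L powr \<beta>))"
  have "0 < \<delta>" by (simp add: \<delta>_def)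
  have "1 \<le> ell" using \<open>2 \<le> ell\<close> by simp
  have inv_\<delta>: "1 / \<delta> = 2 * exp ((ell powr \<gamma>) powr \<beta>)"
    unfolding \<delta>_def L by (simp add: exp_minus inverse_eq_divide)
  note bound = buffered_cube_max_bound[OF x0 _ \<open>2 \<le> ell\<close> L(2) eigenpair proper buf \<open>0 < \<delta>\<close>
      gap_\<Upsilon>[folded \<delta>_def] gap_G[folded \<delta>_def]]
  have "?lhs \<le> (1 / \<delta>)\<^sup>2 * (fact N * (2 * L + 1) ^ (N * d))
      * (fact N * (2 * ell + 1) ^ (N * d))\<^sup>2 * 9 ^ (N * d) * exp (- m * (ell - 2 - 2 * ell powr \<tau>)) * ?M"
    using bound \<open>0 < m\<close> by simp
  also have "\<dots> \<le> exp (- m * ell / 2) * ?M"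
    using prefactor_le[OF \<open>1 \<le> ell\<close> N_pos N_le \<open>\<tau> < 1\<close> _ large] \<open>\<gamma> < 2\<close> bound \<open>0 < m\<close>
    unfolding inv_\<delta> L by (intro mult_right_mono) auto
  also have "\<dots> \<le> exp (- ((m * (1 - 3 * ell powr (- (1 - \<tau>) / 2))) / 2) * ell) * ?M"
    using bound \<open>0 < m\<close> \<open>1 \<le> ell\<close> by (intro mult_right_mono) (auto simp: algebra_simps mult_left_mono)
  finally show ?thesis .
qed

end

theorem lemma3p10:
  fixes m \<tau> \<gamma> \<beta> :: real and d :: nat
  assumes "0 < \<beta>" "\<beta> < 1" "0 < \<tau>" "\<tau> < 1" "1 < \<gamma>" "\<gamma> < 2"
    and "\<beta> < 1 / \<gamma>" "\<gamma> * \<beta> < \<tau>" "1 / \<gamma> < \<tau>"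
    and "0 < m" and "1 \<le> d"
  shows "\<exists>C. \<forall>N::nat. \<forall>ell L::real. \<forall>x0 :: pt. \<forall>lam::real. \<forall>calV calU :: (nat \<Rightarrow> int) \<Rightarrow> real.
           \<forall>\<psi> :: pt \<Rightarrow> complex. \<forall>\<mu>::real. \<forall>\<Upsilon> G :: pt set.
     1 \<le> N \<longrightarrow> 1 \<le> ell \<longrightarrow> L = ell powr \<gamma> \<longrightarrow> x0 \<in> conf N d \<longrightarrow> 0 < lam \<longrightarrow>
     finite {z. (\<forall>k. d \<le> k \<longrightarrow> z k = 0) \<and> calU z \<noteq> 0} \<longrightarrow>
     is_eigenpair N d lam calV calU (cube N d L x0) \<psi> \<mu> \<longrightarrow>
     \<Upsilon> \<subset> cube N d L x0 \<longrightarrow>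
     buffered N d lam calV calU \<tau> m ell L x0 \<Upsilon> G \<longrightarrow>
     (\<forall>e \<in> spec N d lam calV calU \<Upsilon>. 1/2 * exp (- (L powr \<beta>)) \<le> \<bar>\<mu> - e\<bar>) \<longrightarrow>
     (\<forall>a \<in> G. \<forall>e \<in> spec N d lam calV calU (cube N d ell a). 1/2 * exp (- (L powr \<beta>)) \<le> \<bar>\<mu> - e\<bar>) \<longrightarrow>
     C * (real N * ln (2 + real N)) powr (1 / \<tau>) \<le> ell \<longrightarrow>
     Max ((\<lambda>y. cmod (\<psi> y)) ` \<Upsilon>)
       \<le> exp (- ((m * (1 - 3 * ell powr (- (1 - \<tau>) / 2))) / 2) * ell) *
          Max (\<Union>a\<in>G. (\<lambda>v. cmod (\<psi> v)) ` ex_bdry N d (cube N d L x0) (cube N d ell a))"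
proof -
  have "\<gamma> * \<beta> < 1" using assms(5,7) by (simp add: field_simps)
  then obtain l0 where l0: "\<forall>ell\<ge>l0. 2 \<le> ell \<and> ell + 1 \<le> ell powr \<gamma> \<and>
      ln 4 + 2 * ell powr (\<gamma> * \<beta>) + 3 * (ell powr \<tau> * ln ell)
      + 5 * real d * (ell powr \<tau> * ln (3 * ell\<^sup>2)) + 2 * m + 2 * m * ell powr \<tau> \<le> m * ell / 2"
    using eventually_large_scale[OF \<open>\<tau> < 1\<close> \<open>1 < \<gamma>\<close> _ \<open>0 < m\<close>, of \<beta> d]
    unfolding eventually_at_top_linorder by blast
  show ?thesis
  proof (intro exI[of _ "max 1 l0"] allI impI)
    fix N :: nat and ell L :: real and x0 :: pt and lam :: real and calV calU :: "(nat \<Rightarrow> int) \<Rightarrow> real"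
      and \<psi> :: "pt \<Rightarrow> complex" and \<mu> :: real and \<Upsilon> G :: "pt set"
    assume N: "1 \<le> N" and "1 \<le> ell" and L: "L = ell powr \<gamma>" and x0: "x0 \<in> conf N d"
      and eigenpair: "is_eigenpair N d lam calV calU (cube N d L x0) \<psi> \<mu>"
      and proper: "\<Upsilon> \<subset> cube N d L x0" and buf: "buffered N d lam calV calU \<tau> m ell L x0 \<Upsilon> G"
      and gap_\<Upsilon>: "\<forall>e \<in> spec N d lam calV calU \<Upsilon>. 1/2 * exp (- (L powr \<beta>)) \<le> \<bar>\<mu> - e\<bar>"
      and gap_G: "\<forall>a \<in> G. \<forall>e \<in> spec N d lam calV calU (cube N d ell a). 1/2 * exp (- (L powr \<beta>)) \<le> \<bar>\<mu> - e\<bar>"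
      and scale: "max 1 l0 * (real N * ln (2 + real N)) powr (1 / \<tau>) \<le> ell"
    \<comment> \<open>Not needed: \<open>0 < lam\<close>, the finite support of \<open>calU\<close>, \<open>\<beta> < 1\<close>, \<open>\<gamma> * \<beta> < \<tau>\<close>, \<open>1 / \<gamma> < \<tau>\<close>.\<close>
    interpret config_space N d using N \<open>1 \<le> d\<close> by unfold_locales
    have "max 1 l0 \<le> ell" and N_le: "real N \<le> ell powr \<tau>"
      using scale_condition_bounds[OF _ N \<open>0 < \<tau>\<close> scale] by auto
    with l0 L have "2 \<le> ell" "ell + 1 \<le> L" and large: "ln 4 + 2 * ell powr (\<gamma> * \<beta>)
        + 3 * (ell powr \<tau> * ln ell) + 5 * real d * (ell powr \<tau> * ln (3 * ell\<^sup>2)) + 2 * m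
        + 2 * m * ell powr \<tau> \<le> m * ell / 2"
      by auto
    then show "Max ((\<lambda>y. cmod (\<psi> y)) ` \<Upsilon>) \<le> exp (- ((m * (1 - 3 * ell powr (- (1 - \<tau>) / 2))) / 2) * ell)
        * Max (\<Union>a\<in>G. (\<lambda>v. cmod (\<psi> v)) ` ex_bdry N d (cube N d L x0) (cube N d ell a))"
      by (rule buffered_cube_decay[OF x0 _ L _ \<open>\<tau> < 1\<close> \<open>\<gamma> < 2\<close> \<open>0 < m\<close> N_le _
            eigenpair proper buf gap_\<Upsilon> gap_G])
  qed
qed

end
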